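(* Let $n\ge2$ and let $\gamma:I\to\mathbb{R}^2$ be a $C^\infty$ curve with $0\in I$. Then $\gamma'(0)=\cdots=\gamma^{(n-1)}(0)=\mathbf{0}$ and $\det(\gamma^{(n)}(0),\gamma^{(n+1)}(0))\neq0$ if and only if $\gamma$ is $\mathcal{A}$-equivalent at $t=0$ to a curve $\gamma_0(t)=(t^n,t^{n+1})+h(t)$, where $h$ is an $\mathbb{R}^2$-valued $C^\infty$ function with $h(0)=h'(0)=\cdots=h^{(n+2)}(0)=\mathbf{0}$.
   Context: $\mathcal{A}$-equivalence of curve germs: existence of $C^\infty$ diffeomorphism germs $\psi$ of $(\mathbb{R},0)$ and $\Psi$ of $\mathbb{R}^2$ with $\Psi\circ\gamma_1\circ\psi^{-1}=\gamma_2$. *)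

theory Defs
  imports "HOL-Analysis.Analysis"
begin

fun dderivs :: "'a::real_normed_vector list \<Rightarrow> ('a \<Rightarrow> 'b::real_normed_vector) \<Rightarrow> 'a \<Rightarrow> 'b" where
  "dderivs [] f = f"
| "dderivs (v # vs) f = (\<lambda>x. frechet_derivative (dderivs vs f) (at x) v)"

definition smooth_on :: "'a::real_normed_vector set \<Rightarrow> ('a \<Rightarrow> 'b::real_normed_vector) \<Rightarrow> bool" where
  "smooth_on U f \<longleftrightarrow> open U \<and> (\<forall>vs. \<forall>x\<in>U. dderivs vs f differentiable (at x))"

definition nderiv :: "nat \<Rightarrow> (real \<Rightarrow> 'b::real_normed_vector) \<Rightarrow> real \<Rightarrow> 'b" where
  "nderiv k f = ((\<lambda>g t. vector_derivative g (at t)) ^^ k) f"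

definition det2 :: "real \<times> real \<Rightarrow> real \<times> real \<Rightarrow> real" where
  "det2 a b = fst a * snd b - snd a * fst b"

definition diffeo_germ :: "('a::real_normed_vector \<Rightarrow> 'a) \<Rightarrow> 'a \<Rightarrow> 'a \<Rightarrow> bool" where
  "diffeo_germ f p q \<longleftrightarrow> (\<exists>U V g. p \<in> U \<and> f p = q \<and> smooth_on U f \<and> smooth_on V g \<and>
      f ` U = V \<and> (\<forall>x\<in>U. g (f x) = x) \<and> (\<forall>y\<in>V. f (g y) = y))"

text \<open>A-equivalence of curve germs at t = 0: Psi o gamma1 o psi^{-1} = gamma2 as germs,
  written equivalently as Psi o gamma1 = gamma2 o psi near 0.\<close>
definition A_equiv_at0 :: "(real \<Rightarrow> real \<times> real) \<Rightarrow> (real \<Rightarrow> real \<times> real) \<Rightarrow> bool" where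
  "A_equiv_at0 \<gamma>1 \<gamma>2 \<longleftrightarrow> (\<exists>\<psi> \<Psi> W. diffeo_germ \<psi> 0 0 \<and> diffeo_germ \<Psi> (\<gamma>1 0) (\<gamma>2 0) \<and>
      open W \<and> 0 \<in> W \<and> (\<forall>s\<in>W. \<Psi> (\<gamma>1 s) = \<gamma>2 (\<psi> s)))"

end

theory Submission
  imports Defs
begin

text \<open>
  If the derivatives of orders 1, ..., n - 1 of \<gamma> vanish at 0, Taylor's formula gives
  \<gamma>(s) = \<gamma>(0) + s^n A + s^(n+1) B + s^(n+2) C + O(s^(n+3)), and the determinant condition says that
  A, B is a basis of the plane. The reparametrisation s = t + d t^2 + e t^3 turns the coefficient of
  t^(n+2) into ((n choose 2) d^2 + n e) A + (n+1) d B + C, which vanishes for suitable d, e; the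
  affine chart sending \<gamma>(0), A, n d A + B to 0, (1, 0), (0, 1) then gives the normal form
  (t^n, t^(n+1)) + O(t^(n+3)).

  Conversely, if \<Psi> \<circ> \<gamma> = c \<circ> \<psi> with c in normal form, then \<gamma> = G \<circ> c \<circ> \<psi> near 0, where G
  is the inverse of \<Psi>. Since c \<circ> \<psi> vanishes to order n at 0, its composite with G has, up to
  order 2n - 1 \<ge> n + 1, the derivatives of c \<circ> \<psi> mapped by the invertible linear map DG. This gives
  the vanishing of the lower derivatives of \<gamma>, and the determinant of its derivatives of orders n and
  n + 1 is det DG \<cdot> n! (n+1)! \<psi>'(0)^(2n+1) \<noteq> 0.
\<close>

definition vderiv :: "(real \<Rightarrow> 'b::real_normed_vector) \<Rightarrow> real \<Rightarrow> 'b" where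
  "vderiv f = (\<lambda>t. vector_derivative f (at t))"

lemma nderiv_0 [simp]: "nderiv 0 f = f"
  by (simp add: nderiv_def)

lemma nderiv_Suc: "nderiv (Suc k) f = vderiv (nderiv k f)"
  unfolding nderiv_def vderiv_def by simp

lemma nderiv_Suc_right: "nderiv (Suc k) f = nderiv k (vderiv f)"
  unfolding nderiv_def vderiv_def by (simp add: funpow_Suc_right del: funpow.simps)

lemma vderiv_works: "f differentiable (at x) \<Longrightarrow> (f has_vector_derivative vderiv f x) (at x)"
  unfolding vderiv_def using vector_derivative_works by blast

lemma vderiv_eqI: "(f has_vector_derivative f') (at x) \<Longrightarrow> vderiv f x = f'"
  unfolding vderiv_def by (simp add: vector_derivative_at)

lemma vderiv_transform_within_open:
  assumes "open U" "x \<in> U" "\<And>y. y \<in> U \<Longrightarrow> f y = g y"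
  shows "vderiv f x = vderiv g x"
proof -
  have "(f has_vector_derivative f') (at x) \<longleftrightarrow> (g has_vector_derivative f') (at x)" for f'
    using assms has_vector_derivative_transform_within_open[of _ _ x U] by metis
  then show ?thesis unfolding vderiv_def vector_derivative_def by simp
qed

lemma nderiv_transform_within_open:
  assumes "open U" "\<And>y. y \<in> U \<Longrightarrow> f y = g y" "x \<in> U"
  shows "nderiv j f x = nderiv j g x"
  using assms(3)
proof (induction j arbitrary: x)
  case 0
  then show ?case using assms by simp
next
  case (Suc j)
  then show ?case unfolding nderiv_Suc by (intro vderiv_transform_within_open[OF assms(1)]) auto
qed

lemma differentiable_transform_within_open:
  assumes "open U" "x \<in> U" "\<And>y. y \<in> U \<Longrightarrow> f y = g y" "f differentiable (at x)"
  shows "g differentiable (at x)"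
  using assms has_derivative_transform_within_open unfolding differentiable_def by blast

lemma vderiv_const [simp]: "vderiv (\<lambda>x. c) = (\<lambda>x. 0)"
  unfolding vderiv_def by simp

lemma vderiv_scaleR:
  "a differentiable (at y) \<Longrightarrow> g differentiable (at y) \<Longrightarrow>
   vderiv (\<lambda>x. a x *\<^sub>R g x) y = a y *\<^sub>R vderiv g y + vderiv a y *\<^sub>R g y"
  using vderiv_works[of a y] vderiv_works[of g y]
    has_vector_derivative_scaleR[of a "vderiv a y" y UNIV g "vderiv g y"]
  unfolding has_real_derivative_iff_has_vector_derivative by (blast intro: vderiv_eqI)

lemma vderiv_compose:
  "\<phi> differentiable (at y) \<Longrightarrow> f differentiable (at (\<phi> y)) \<Longrightarrow>
   vderiv (\<lambda>x. f (\<phi> x)) y = vderiv \<phi> y *\<^sub>R vderiv f (\<phi> y)"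
  using vector_diff_chain_at[OF vderiv_works vderiv_works, of \<phi> y f]
  by (auto simp: o_def intro: vderiv_eqI)

lemma vderiv_bounded_linear:
  "bounded_linear L \<Longrightarrow> f differentiable (at y) \<Longrightarrow> vderiv (\<lambda>x. L (f x)) y = L (vderiv f y)"
  using bounded_linear.has_vector_derivative[OF _ vderiv_works] vderiv_eqI by blast

definition Ck_on :: "nat \<Rightarrow> real set \<Rightarrow> (real \<Rightarrow> 'b::real_normed_vector) \<Rightarrow> bool" where
  "Ck_on k U f \<longleftrightarrow> (\<forall>j<k. \<forall>x\<in>U. nderiv j f differentiable (at x))"

lemma Ck_on_0 [simp]: "Ck_on 0 U f"
  by (simp add: Ck_on_def)

lemma Ck_on_Suc: "Ck_on (Suc k) U f \<longleftrightarrow> (\<forall>x\<in>U. f differentiable (at x)) \<and> Ck_on k U (vderiv f)"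
proof
  assume "Ck_on (Suc k) U f"
  then show "(\<forall>x\<in>U. f differentiable (at x)) \<and> Ck_on k U (vderiv f)"
    unfolding Ck_on_def by (metis Suc_mono nderiv_0 nderiv_Suc_right zero_less_Suc)
next
  assume "(\<forall>x\<in>U. f differentiable (at x)) \<and> Ck_on k U (vderiv f)"
  then show "Ck_on (Suc k) U f"
    unfolding Ck_on_def by (metis less_Suc_eq_0_disj nderiv_0 nderiv_Suc_right)
qed

lemma Ck_on_mono: "Ck_on m U f \<Longrightarrow> k \<le> m \<Longrightarrow> Ck_on k U f"
  unfolding Ck_on_def by auto

lemma Ck_on_transform_within_open:
  assumes "open U" "\<And>y. y \<in> U \<Longrightarrow> f y = g y" "Ck_on k U f"
  shows "Ck_on k U g"
  unfolding Ck_on_def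
proof (intro allI impI ballI)
  fix j x assume "j < k" "x \<in> U"
  then have "nderiv j f differentiable (at x)" using assms(3) unfolding Ck_on_def by blast
  moreover have "\<And>y. y \<in> U \<Longrightarrow> nderiv j f y = nderiv j g y"
    by (rule nderiv_transform_within_open[OF assms(1)]) (auto simp: assms(2))
  ultimately show "nderiv j g differentiable (at x)"
    using differentiable_transform_within_open[OF assms(1) \<open>x \<in> U\<close>] by blast
qed

lemma Ck_on_Suc_via_vderiv:
  assumes "open U" "\<And>y. y \<in> U \<Longrightarrow> (f has_vector_derivative f' y) (at y)" "Ck_on k U f'"
  shows "Ck_on (Suc k) U f"
proof -
  have "Ck_on k U (vderiv f)"
    by (rule Ck_on_transform_within_open[OF assms(1) _ assms(3)]) (use assms(2) vderiv_eqI in metis)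
  then show ?thesis using assms(2) differentiableI_vector by (auto simp: Ck_on_Suc)
qed

lemma Ck_on_add:
  assumes "open U" "Ck_on k U f" "Ck_on k U g"
  shows "Ck_on k U (\<lambda>x. f x + g x)"
  using assms(2,3)
proof (induction k arbitrary: f g)
  case (Suc k)
  then show ?case
    by (intro Ck_on_Suc_via_vderiv[OF assms(1) _ Suc.IH])
       (auto simp: Ck_on_Suc intro!: has_vector_derivative_add vderiv_works)
qed simp

lemma Ck_on_bounded_linear:
  assumes "open U" "bounded_linear L" "Ck_on k U f"
  shows "Ck_on k U (\<lambda>x. L (f x))"
  using assms(3)
proof (induction k arbitrary: f)
  case (Suc k)
  then show ?case
    by (intro Ck_on_Suc_via_vderiv[OF assms(1) _ Suc.IH])
       (auto simp: Ck_on_Suc intro!: bounded_linear.has_vector_derivative[OF assms(2)] vderiv_works)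
qed simp

lemma Ck_on_scaleR:
  assumes "open U" "Ck_on k U a" "Ck_on k U g"
  shows "Ck_on k U (\<lambda>x. a x *\<^sub>R g x)"
  using assms(2,3)
proof (induction k arbitrary: a g)
  case (Suc k)
  have da: "\<forall>x\<in>U. a differentiable (at x)" and dg: "\<forall>x\<in>U. g differentiable (at x)"
    and "Ck_on k U (vderiv a)" "Ck_on k U (vderiv g)" "Ck_on k U a" "Ck_on k U g"
    using Suc.prems Ck_on_mono[OF Suc.prems(1)] Ck_on_mono[OF Suc.prems(2)] by (auto simp: Ck_on_Suc)
  then have "Ck_on k U (\<lambda>y. a y *\<^sub>R vderiv g y + vderiv a y *\<^sub>R g y)"
    by (intro Ck_on_add[OF assms(1)] Suc.IH)
  moreover have "((\<lambda>x. a x *\<^sub>R g x) has_vector_derivative a y *\<^sub>R vderiv g y + vderiv a y *\<^sub>R g y) (at y)"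
    if "y \<in> U" for y
    using vderiv_works[of a y] vderiv_works[of g y] da dg that
      has_vector_derivative_scaleR[of a "vderiv a y" y UNIV g "vderiv g y"]
    unfolding has_real_derivative_iff_has_vector_derivative by blast
  ultimately show ?case by (intro Ck_on_Suc_via_vderiv[OF assms(1)])
qed simp

lemma Ck_on_compose:
  assumes "open U" "open V" "Ck_on k V f" "Ck_on k U \<phi>" "\<phi> ` U \<subseteq> V"
  shows "Ck_on k U (\<lambda>x. f (\<phi> x))"
  using assms(3,4)
proof (induction k arbitrary: f)
  case (Suc k)
  have df: "\<forall>x\<in>V. f differentiable (at x)" and dp: "\<forall>x\<in>U. \<phi> differentiable (at x)"
    and "Ck_on k V (vderiv f)" "Ck_on k U (vderiv \<phi>)" "Ck_on k U \<phi>"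
    using Suc.prems Ck_on_mono[OF Suc.prems(2)] by (auto simp: Ck_on_Suc)
  then have "Ck_on k U (\<lambda>y. vderiv \<phi> y *\<^sub>R vderiv f (\<phi> y))"
    by (intro Ck_on_scaleR[OF assms(1)] Suc.IH)
  moreover have "((\<lambda>x. f (\<phi> x)) has_vector_derivative vderiv \<phi> y *\<^sub>R vderiv f (\<phi> y)) (at y)"
    if "y \<in> U" for y
    using vector_diff_chain_at[OF vderiv_works vderiv_works, of \<phi> y f] dp df that assms(5)
    by (auto simp: o_def)
  ultimately show ?case by (intro Ck_on_Suc_via_vderiv[OF assms(1)])
qed simp

definition smooth_curve_on :: "real set \<Rightarrow> (real \<Rightarrow> 'b::real_normed_vector) \<Rightarrow> bool" where
  "smooth_curve_on U f \<longleftrightarrow> (\<forall>k. Ck_on k U f)"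

lemma smooth_curve_on_nderiv_differentiable:
  "smooth_curve_on U f \<Longrightarrow> x \<in> U \<Longrightarrow> nderiv j f differentiable (at x)"
  unfolding smooth_curve_on_def Ck_on_def by (meson lessI)

lemma smooth_curve_on_differentiable: "smooth_curve_on U f \<Longrightarrow> x \<in> U \<Longrightarrow> f differentiable (at x)"
  using smooth_curve_on_nderiv_differentiable[of U f x 0] by simp

lemma smooth_curve_on_vderiv: "smooth_curve_on U f \<Longrightarrow> smooth_curve_on U (vderiv f)"
  unfolding smooth_curve_on_def using Ck_on_Suc by blast

lemma smooth_curve_on_subset: "smooth_curve_on U f \<Longrightarrow> V \<subseteq> U \<Longrightarrow> smooth_curve_on V f"
  unfolding smooth_curve_on_def Ck_on_def by blast

lemma smooth_curve_on_add:
  "open U \<Longrightarrow> smooth_curve_on U f \<Longrightarrow> smooth_curve_on U g \<Longrightarrow> smooth_curve_on U (\<lambda>x. f x + g x)"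
  unfolding smooth_curve_on_def using Ck_on_add by blast

lemma smooth_curve_on_bounded_linear:
  "open U \<Longrightarrow> bounded_linear L \<Longrightarrow> smooth_curve_on U f \<Longrightarrow> smooth_curve_on U (\<lambda>x. L (f x))"
  unfolding smooth_curve_on_def using Ck_on_bounded_linear by blast

lemma smooth_curve_on_scaleR:
  "open U \<Longrightarrow> smooth_curve_on U a \<Longrightarrow> smooth_curve_on U g \<Longrightarrow> smooth_curve_on U (\<lambda>x. a x *\<^sub>R g x)"
  unfolding smooth_curve_on_def using Ck_on_scaleR by blast

lemma smooth_curve_on_mult:
  "open U \<Longrightarrow> smooth_curve_on U a \<Longrightarrow> smooth_curve_on U (g :: real \<Rightarrow> real) \<Longrightarrow>
   smooth_curve_on U (\<lambda>x. a x * g x)"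
  using smooth_curve_on_scaleR[of U a g] by simp

lemma smooth_curve_on_compose:
  "open U \<Longrightarrow> open V \<Longrightarrow> smooth_curve_on V f \<Longrightarrow> smooth_curve_on U \<phi> \<Longrightarrow> \<phi> ` U \<subseteq> V \<Longrightarrow>
   smooth_curve_on U (\<lambda>x. f (\<phi> x))"
  unfolding smooth_curve_on_def using Ck_on_compose by blast

lemma nderiv_const: "nderiv j (\<lambda>x. c) = (\<lambda>x. if j = 0 then c else 0)"
  by (induction j) (simp_all add: nderiv_Suc)

lemma smooth_curve_on_const: "smooth_curve_on U (\<lambda>x. c)"
  unfolding smooth_curve_on_def Ck_on_def nderiv_const by simp

lemma smooth_curve_on_diff:
  assumes "open U" "smooth_curve_on U f" "smooth_curve_on U g"
  shows "smooth_curve_on U (\<lambda>x. f x - g x)"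
  using smooth_curve_on_add[OF assms(1,2) smooth_curve_on_bounded_linear[OF assms(1)
        bounded_linear_minus[OF bounded_linear_ident] assms(3)]] by simp

lemma nderiv_Suc_transform_within_open:
  assumes "open U" "x \<in> U" "\<And>y. y \<in> U \<Longrightarrow> vderiv f y = f' y"
  shows "nderiv (Suc j) f x = nderiv j f' x"
  unfolding nderiv_Suc_right using nderiv_transform_within_open[OF assms(1) assms(3,2)] .

lemma nderiv_add:
  assumes "open U" "smooth_curve_on U f" "smooth_curve_on U g" "x \<in> U"
  shows "nderiv j (\<lambda>x. f x + g x) x = nderiv j f x + nderiv j g x"
  using assms(2-4)
proof (induction j arbitrary: f g x)
  case (Suc j)
  have "nderiv (Suc j) (\<lambda>x. f x + g x) x = nderiv j (\<lambda>y. vderiv f y + vderiv g y) x"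
    using Suc.prems
    by (intro nderiv_Suc_transform_within_open[OF assms(1)])
       (auto simp: vderiv_def smooth_curve_on_differentiable)
  then show ?case
    using Suc.IH[OF smooth_curve_on_vderiv smooth_curve_on_vderiv] Suc.prems
    by (simp add: nderiv_Suc_right)
qed simp

lemma nderiv_bounded_linear:
  assumes "open U" "bounded_linear L" "smooth_curve_on U f" "x \<in> U"
  shows "nderiv j (\<lambda>x. L (f x)) x = L (nderiv j f x)"
  using assms(3,4)
proof (induction j arbitrary: f x)
  case (Suc j)
  have "nderiv (Suc j) (\<lambda>x. L (f x)) x = nderiv j (\<lambda>y. L (vderiv f y)) x"
    using Suc.prems
    by (intro nderiv_Suc_transform_within_open[OF assms(1)])
       (auto intro: vderiv_bounded_linear[OF assms(2)] smooth_curve_on_differentiable)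
  then show ?case
    using Suc.IH[OF smooth_curve_on_vderiv] Suc.prems by (simp add: nderiv_Suc_right)
qed simp

lemma nderiv_diff:
  assumes "open U" "smooth_curve_on U f" "smooth_curve_on U g" "x \<in> U"
  shows "nderiv j (\<lambda>x. f x - g x) x = nderiv j f x - nderiv j g x"
proof -
  have "bounded_linear (\<lambda>x::'a. - x)" by (rule bounded_linear_minus[OF bounded_linear_ident])
  note neg = smooth_curve_on_bounded_linear[OF assms(1) this assms(3)]
    nderiv_bounded_linear[OF assms(1) this assms(3,4)]
  show ?thesis using nderiv_add[OF assms(1,2) neg(1) assms(4), of j] neg(2) by simp
qed

lemma nderiv_power: "nderiv j (\<lambda>t::real. t ^ m) = (\<lambda>t. (\<Prod>i<j. real (m - i)) * t ^ (m - j))"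
proof (induction j)
  case (Suc j)
  have "((\<lambda>t. (\<Prod>i<j. real (m - i)) * t ^ (m - j)) has_real_derivative
        (\<Prod>i<j. real (m - i)) * (real (m - j) * x ^ (m - j - 1))) (at x)" for x
    by (auto intro!: derivative_eq_intros)
  then have "vderiv (\<lambda>t. (\<Prod>i<j. real (m - i)) * t ^ (m - j)) x =
     (\<Prod>i<Suc j. real (m - i)) * x ^ (m - Suc j)" for x
    unfolding has_real_derivative_iff_has_vector_derivative
    by (auto dest!: vderiv_eqI simp: algebra_simps)
  then show ?case by (simp add: nderiv_Suc Suc fun_eq_iff)
qed simp

lemma smooth_curve_on_power: "smooth_curve_on U (\<lambda>t::real. t ^ m)"
  unfolding smooth_curve_on_def Ck_on_def nderiv_power by simp

lemma nderiv_power_at_0: "nderiv j (\<lambda>t::real. t ^ m) 0 = (if j = m then fact m else 0)"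
proof -
  have "(\<Prod>i<m. real (m - i)) = fact m"
    by (simp add: fact_prod_rev atLeast0LessThan)
  moreover have "(\<Prod>i<j. real (m - i)) = 0" if "m < j"
    using that by (intro prod_zero) auto
  ultimately show ?thesis by (auto simp: nderiv_power)
qed

lemma smooth_curve_on_power_scaleR: "smooth_curve_on U (\<lambda>t::real. t ^ k *\<^sub>R v)"
  using smooth_curve_on_bounded_linear[OF open_UNIV bounded_linear_scaleR_left smooth_curve_on_power]
    smooth_curve_on_subset by blast

lemma nderiv_power_scaleR_at_0:
  "nderiv j (\<lambda>t::real. t ^ k *\<^sub>R v) 0 = (if j = k then fact k else 0) *\<^sub>R v"
  using nderiv_bounded_linear[OF open_UNIV bounded_linear_scaleR_left smooth_curve_on_power UNIV_I,
      of j k v 0]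
  by (simp add: nderiv_power_at_0)

lemma nderiv_Suc_scaleR:
  assumes "open U" "smooth_curve_on U a" "smooth_curve_on U g" "x \<in> U"
  shows "nderiv (Suc N) (\<lambda>x. a x *\<^sub>R g x) x =
    nderiv N (\<lambda>x. a x *\<^sub>R vderiv g x) x + nderiv N (\<lambda>x. vderiv a x *\<^sub>R g x) x"
proof -
  have "nderiv (Suc N) (\<lambda>x. a x *\<^sub>R g x) x =
      nderiv N (\<lambda>y. a y *\<^sub>R vderiv g y + vderiv a y *\<^sub>R g y) x"
    using assms by (intro nderiv_Suc_transform_within_open vderiv_scaleR)
      (auto intro: smooth_curve_on_differentiable)
  also have "\<dots> = nderiv N (\<lambda>x. a x *\<^sub>R vderiv g x) x + nderiv N (\<lambda>x. vderiv a x *\<^sub>R g x) x"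
    using assms by (intro nderiv_add smooth_curve_on_scaleR smooth_curve_on_vderiv)
  finally show ?thesis .
qed

theorem nderiv_scaleR:
  assumes "open U" "smooth_curve_on U a" "smooth_curve_on U g" "x \<in> U"
  shows "nderiv N (\<lambda>x. a x *\<^sub>R g x) x =
    (\<Sum>i\<le>N. (real (N choose i) * nderiv i a x) *\<^sub>R nderiv (N - i) g x)"
  using assms(2,3)
proof (induction N arbitrary: a g)
  case (Suc N)
  let ?A = "\<lambda>i. nderiv i a x" and ?G = "\<lambda>i. nderiv i g x"
  have IH1: "nderiv N (\<lambda>x. a x *\<^sub>R vderiv g x) x = (\<Sum>i\<le>N. (real (N choose i) * ?A i) *\<^sub>R ?G (Suc N - i))"
    using Suc.IH[OF Suc.prems(1) smooth_curve_on_vderiv[OF Suc.prems(2)]]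
    by (simp add: nderiv_Suc_right[symmetric] Suc_diff_le)
  have IH2: "nderiv N (\<lambda>x. vderiv a x *\<^sub>R g x) x = (\<Sum>i\<le>N. (real (N choose i) * ?A (Suc i)) *\<^sub>R ?G (N - i))"
    using Suc.IH[OF smooth_curve_on_vderiv[OF Suc.prems(1)] Suc.prems(2)]
    by (simp add: nderiv_Suc_right[symmetric])
  have "(\<Sum>i\<le>N. (real (N choose i) * ?A i) *\<^sub>R ?G (Suc N - i)) =
      (\<Sum>i\<le>Suc N. (real (N choose i) * ?A i) *\<^sub>R ?G (Suc N - i))"
    by simp
  also have "\<dots> = ?A 0 *\<^sub>R ?G (Suc N) + (\<Sum>i\<le>N. (real (N choose Suc i) * ?A (Suc i)) *\<^sub>R ?G (N - i))"
    by (subst sum.atMost_Suc_shift) simp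
  moreover have "(\<Sum>i\<le>N. (real (N choose Suc i) * ?A (Suc i)) *\<^sub>R ?G (N - i)) +
      (\<Sum>i\<le>N. (real (N choose i) * ?A (Suc i)) *\<^sub>R ?G (N - i)) =
      (\<Sum>i\<le>N. (real (Suc N choose Suc i) * ?A (Suc i)) *\<^sub>R ?G (N - i))"
    unfolding sum.distrib[symmetric] scaleR_add_left[symmetric] by (simp add: distrib_right add.commute)
  ultimately have "nderiv (Suc N) (\<lambda>x. a x *\<^sub>R g x) x = ?A 0 *\<^sub>R ?G (Suc N) +
      (\<Sum>i\<le>N. (real (Suc N choose Suc i) * ?A (Suc i)) *\<^sub>R ?G (N - i))"
    unfolding nderiv_Suc_scaleR[OF assms(1) Suc.prems assms(4)] IH1 IH2 by (simp only: add.assoc)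
  also have "\<dots> = (\<Sum>i\<le>Suc N. (real (Suc N choose i) * ?A i) *\<^sub>R ?G (Suc N - i))"
    by (subst sum.atMost_Suc_shift) simp
  finally show ?case .
qed simp

lemma smooth_curve_on_sum:
  assumes "open U" "finite S" "\<And>i. i \<in> S \<Longrightarrow> smooth_curve_on U (f i)"
  shows "smooth_curve_on U (\<lambda>x. \<Sum>i\<in>S. f i x)"
  using assms(2,3)
proof (induction S rule: finite_induct)
  case empty
  then show ?case by (simp add: smooth_curve_on_const)
next
  case (insert i S)
  then show ?case by (simp add: smooth_curve_on_add[OF assms(1)])
qed

lemma nderiv_sum:
  assumes "open U" "x \<in> U" "finite S" "\<And>i. i \<in> S \<Longrightarrow> smooth_curve_on U (f i)"
  shows "nderiv j (\<lambda>x. \<Sum>i\<in>S. f i x) x = (\<Sum>i\<in>S. nderiv j (f i) x)"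
  using assms(3,4)
proof (induction S rule: finite_induct)
  case empty
  then show ?case by (simp add: nderiv_const)
next
  case (insert i S)
  then show ?case
    by (simp add: nderiv_add[OF assms(1) _ smooth_curve_on_sum[OF assms(1)] assms(2)])
qed

section \<open>Order of vanishing at zero\<close>

definition vanishes_to_order :: "nat \<Rightarrow> (real \<Rightarrow> 'b::real_normed_vector) \<Rightarrow> bool" where
  "vanishes_to_order m f \<longleftrightarrow> (\<forall>j<m. nderiv j f 0 = 0)"

lemma vanishes_to_order_0 [simp]: "vanishes_to_order 0 f"
  by (simp add: vanishes_to_order_def)

lemma vanishes_to_order_Suc:
  "vanishes_to_order (Suc m) f \<longleftrightarrow> f 0 = 0 \<and> vanishes_to_order m (vderiv f)"
  unfolding vanishes_to_order_def
  by (metis (no_types, lifting) less_Suc_eq_0_disj nderiv_0 nderiv_Suc_right)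

lemma vanishes_to_order_mono: "vanishes_to_order m f \<Longrightarrow> k \<le> m \<Longrightarrow> vanishes_to_order k f"
  unfolding vanishes_to_order_def by auto

lemma vanishes_to_order_transform_within_open:
  "open U \<Longrightarrow> 0 \<in> U \<Longrightarrow> (\<And>y. y \<in> U \<Longrightarrow> f y = g y) \<Longrightarrow> vanishes_to_order m f \<Longrightarrow>
   vanishes_to_order m g"
  unfolding vanishes_to_order_def using nderiv_transform_within_open by metis

lemma vanishes_to_order_add:
  "open U \<Longrightarrow> 0 \<in> U \<Longrightarrow> smooth_curve_on U f \<Longrightarrow> smooth_curve_on U g \<Longrightarrow>
   vanishes_to_order m f \<Longrightarrow> vanishes_to_order m g \<Longrightarrow> vanishes_to_order m (\<lambda>x. f x + g x)"
  unfolding vanishes_to_order_def using nderiv_add by fastforce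

lemma vanishes_to_order_bounded_linear:
  assumes "open U" "0 \<in> U" "bounded_linear L" "smooth_curve_on U f" "vanishes_to_order m f"
  shows "vanishes_to_order m (\<lambda>x. L (f x))"
  using assms nderiv_bounded_linear[OF assms(1,3,4,2)] linear_simps(3)[OF assms(3)]
  unfolding vanishes_to_order_def by simp

lemma vanishes_to_order_power: "k \<le> m \<Longrightarrow> vanishes_to_order k (\<lambda>t::real. t ^ m *\<^sub>R v)"
  unfolding vanishes_to_order_def nderiv_power_scaleR_at_0 by simp

text \<open>In the Leibniz sum only the term \<open>i = p\<close> can survive.\<close>

lemma vanishes_to_order_scaleR:
  assumes "open U" "0 \<in> U" "smooth_curve_on U a" "smooth_curve_on U g"
    and "vanishes_to_order p a" "vanishes_to_order q g"
  shows "vanishes_to_order (p + q) (\<lambda>x. a x *\<^sub>R g x)"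
    and "nderiv (p + q) (\<lambda>x. a x *\<^sub>R g x) 0 =
      (real ((p + q) choose p) * nderiv p a 0) *\<^sub>R nderiv q g 0"
proof -
  have summand_zero: "(real (N choose i) * nderiv i a 0) *\<^sub>R nderiv (N - i) g 0 = 0"
    if "i \<le> N" "N \<le> p + q" "i \<noteq> p \<or> N < p + q" for i N
  proof (cases "i < p")
    case True
    then show ?thesis using assms(5) by (simp add: vanishes_to_order_def)
  next
    case False
    then have "N - i < q" using that by auto
    then show ?thesis using assms(6) by (simp add: vanishes_to_order_def)
  qed
  note Leibniz = nderiv_scaleR[OF assms(1,3,4,2)]
  show "vanishes_to_order (p + q) (\<lambda>x. a x *\<^sub>R g x)"
    unfolding vanishes_to_order_def Leibniz using summand_zero by (auto intro!: sum.neutral)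
  have "nderiv (p + q) (\<lambda>x. a x *\<^sub>R g x) 0 =
      (\<Sum>i\<le>p + q. if i = p then (real ((p + q) choose p) * nderiv p a 0) *\<^sub>R nderiv q g 0 else 0)"
    unfolding Leibniz using summand_zero by (intro sum.cong) auto
  then show "nderiv (p + q) (\<lambda>x. a x *\<^sub>R g x) 0 =
      (real ((p + q) choose p) * nderiv p a 0) *\<^sub>R nderiv q g 0"
    by simp
qed

lemma vanishes_to_order_compose:
  assumes "open U" "open V" "0 \<in> U" "smooth_curve_on U \<phi>" "\<phi> ` U \<subseteq> V" "\<phi> 0 = 0"
  shows "smooth_curve_on V f \<Longrightarrow> vanishes_to_order m f \<Longrightarrow> vanishes_to_order m (\<lambda>x. f (\<phi> x))"
proof (induction m arbitrary: f)
  case (Suc m)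
  have f': "smooth_curve_on V (vderiv f)" "vanishes_to_order m (vderiv f)"
    using smooth_curve_on_vderiv[OF Suc.prems(1)] Suc.prems(2) by (auto simp: vanishes_to_order_Suc)
  have "vanishes_to_order (0 + m) (\<lambda>y. vderiv \<phi> y *\<^sub>R vderiv f (\<phi> y))"
    by (rule vanishes_to_order_scaleR(1)[OF assms(1,3) smooth_curve_on_vderiv[OF assms(4)]
        smooth_curve_on_compose[OF assms(1,2) f'(1) assms(4,5)] vanishes_to_order_0 Suc.IH[OF f']])
  moreover have "vderiv (\<lambda>x. f (\<phi> x)) y = vderiv \<phi> y *\<^sub>R vderiv f (\<phi> y)" if "y \<in> U" for y
    using that assms(5) by (intro vderiv_compose smooth_curve_on_differentiable[OF assms(4)]
        smooth_curve_on_differentiable[OF Suc.prems(1)]) auto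
  ultimately have "vanishes_to_order m (vderiv (\<lambda>x. f (\<phi> x)))"
    using vanishes_to_order_transform_within_open[OF assms(1,3),
        where f = "\<lambda>y. vderiv \<phi> y *\<^sub>R vderiv f (\<phi> y)"] by simp
  then show ?case using Suc.prems assms(6) by (simp add: vanishes_to_order_Suc)
qed simp

lemma nderiv_power_compose_at_0:
  fixes \<psi> :: "real \<Rightarrow> real"
  assumes "open U" "0 \<in> U" "smooth_curve_on U \<psi>" "\<psi> 0 = 0"
  shows "smooth_curve_on U (\<lambda>x. \<psi> x ^ m) \<and> vanishes_to_order m (\<lambda>x. \<psi> x ^ m) \<and>
    nderiv m (\<lambda>x. \<psi> x ^ m) 0 = fact m * vderiv \<psi> 0 ^ m"
proof (induction m)
  case 0
  then show ?case by (simp add: smooth_curve_on_const)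
next
  case (Suc m)
  then have IH: "smooth_curve_on U (\<lambda>x. \<psi> x ^ m)" "vanishes_to_order m (\<lambda>x. \<psi> x ^ m)"
    "nderiv m (\<lambda>x. \<psi> x ^ m) 0 = fact m * vderiv \<psi> 0 ^ m" by auto
  have "vanishes_to_order 1 \<psi>" using assms(4) by (simp add: vanishes_to_order_Suc)
  note product = vanishes_to_order_scaleR[OF assms(1,2,3) IH(1) this IH(2)]
  have "smooth_curve_on U (\<lambda>x. \<psi> x ^ Suc m)"
    using smooth_curve_on_mult[OF assms(1,3) IH(1)] by simp
  moreover have "vanishes_to_order (Suc m) (\<lambda>x. \<psi> x ^ Suc m)"
    using product(1) by simp
  moreover have "nderiv (Suc m) (\<lambda>x. \<psi> x ^ Suc m) 0 = fact (Suc m) * vderiv \<psi> 0 ^ Suc m"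
    using product(2) IH(3) by (simp add: nderiv_Suc_right)
  ultimately show ?case by blast
qed

theorem taylor_remainder_vanishes_to_order:
  assumes "open U" "0 \<in> U" "smooth_curve_on U f"
  shows "vanishes_to_order (Suc N) (\<lambda>s. f s - (\<Sum>k\<le>N. s ^ k *\<^sub>R (nderiv k f 0 /\<^sub>R fact k)))"
proof -
  let ?T = "\<lambda>s. \<Sum>k\<le>N. s ^ k *\<^sub>R (nderiv k f 0 /\<^sub>R fact k)"
  have T: "smooth_curve_on U ?T"
    by (rule smooth_curve_on_sum[OF assms(1) finite_atMost smooth_curve_on_power_scaleR])
  have "nderiv j ?T 0 = nderiv j f 0" if "j \<le> N" for j
  proof -
    have "nderiv j ?T 0 = (\<Sum>k\<le>N. nderiv j (\<lambda>s. s ^ k *\<^sub>R (nderiv k f 0 /\<^sub>R fact k)) 0)"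
      by (rule nderiv_sum[OF assms(1,2) finite_atMost smooth_curve_on_power_scaleR])
    also have "\<dots> = (\<Sum>k\<le>N. if k = j then nderiv j f 0 else 0)"
      unfolding nderiv_power_scaleR_at_0 by (intro sum.cong) auto
    finally show ?thesis using that by simp
  qed
  moreover have "nderiv j (\<lambda>s. f s - ?T s) 0 = nderiv j f 0 - nderiv j ?T 0" for j
    by (rule nderiv_diff[OF assms(1,3) T assms(2)])
  ultimately show ?thesis unfolding vanishes_to_order_def by simp
qed

definition flat_at0 :: "nat \<Rightarrow> (real \<Rightarrow> 'b::real_normed_vector) \<Rightarrow> bool" where
  "flat_at0 k f \<longleftrightarrow> smooth_curve_on UNIV f \<and> vanishes_to_order k f"

lemma flat_at0_add: "flat_at0 k f \<Longrightarrow> flat_at0 k g \<Longrightarrow> flat_at0 k (\<lambda>t. f t + g t)"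
  unfolding flat_at0_def using smooth_curve_on_add vanishes_to_order_add by blast

lemma flat_at0_scaleR: "flat_at0 k p \<Longrightarrow> flat_at0 k (\<lambda>t. p t *\<^sub>R v)"
  unfolding flat_at0_def
  using smooth_curve_on_bounded_linear vanishes_to_order_bounded_linear bounded_linear_scaleR_left
  by blast

lemma flat_at0_power: "k \<le> m \<Longrightarrow> flat_at0 k (\<lambda>t. t ^ m *\<^sub>R v)"
  unfolding flat_at0_def by (simp add: smooth_curve_on_power_scaleR vanishes_to_order_power)

lemma flat_at0_mono: "flat_at0 m f \<Longrightarrow> k \<le> m \<Longrightarrow> flat_at0 k f"
  unfolding flat_at0_def using vanishes_to_order_mono by blast

section \<open>Smooth maps of the plane along curves\<close>

lemma dderivs_eq_nderiv:
  assumes "open U" "smooth_curve_on U f" "x \<in> U"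
  shows "dderivs vs f x = prod_list vs *\<^sub>R nderiv (length vs) f x"
proof -
  have "\<forall>x\<in>U. dderivs vs f x = prod_list vs *\<^sub>R nderiv (length vs) f x"
  proof (induction vs)
    case (Cons v vs)
    show ?case
    proof
      fix x assume x: "x \<in> U"
      let ?F = "\<lambda>y. prod_list vs *\<^sub>R nderiv (length vs) f y"
      have dF: "?F differentiable (at x)"
        using smooth_curve_on_nderiv_differentiable[OF assms(2) x] by (auto intro: differentiable_scaleR)
      have "frechet_derivative (dderivs vs f) (at x) = frechet_derivative ?F (at x)"
        using Cons x by (intro frechet_derivative_transform_within_open[OF dF assms(1), symmetric]) auto
      then have "dderivs (v # vs) f x = v *\<^sub>R vderiv ?F x"
        using frechet_derivative_eq_vector_derivative[OF dF] by (simp add: vderiv_def)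
      then show "dderivs (v # vs) f x = prod_list (v # vs) *\<^sub>R nderiv (length (v # vs)) f x"
        using vderiv_bounded_linear[OF bounded_linear_scaleR_right
            smooth_curve_on_nderiv_differentiable[OF assms(2) x]]
        by (simp add: nderiv_Suc)
    qed
  qed simp
  then show ?thesis using assms(3) by blast
qed

lemma smooth_on_iff_smooth_curve_on:
  fixes f :: "real \<Rightarrow> 'b::real_normed_vector"
  shows "smooth_on U f \<longleftrightarrow> open U \<and> smooth_curve_on U f"
proof
  assume "open U \<and> smooth_curve_on U f"
  then have U: "open U" and f: "smooth_curve_on U f" by auto
  have "dderivs vs f differentiable (at x)" if x: "x \<in> U" for vs x
  proof -
    have d: "(\<lambda>y. prod_list vs *\<^sub>R nderiv (length vs) f y) differentiable (at x)"
      using smooth_curve_on_nderiv_differentiable[OF f x] by (auto intro: differentiable_scaleR)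
    show ?thesis
      by (rule differentiable_transform_within_open[OF U x _ d]) (simp add: dderivs_eq_nderiv[OF U f])
  qed
  then show "smooth_on U f" unfolding smooth_on_def using U by blast
next
  assume "smooth_on U f"
  then have U: "open U" and d: "\<And>vs x. x \<in> U \<Longrightarrow> dderivs vs f differentiable (at x)"
    unfolding smooth_on_def by auto
  have eq: "\<forall>x\<in>U. nderiv k f x = dderivs (replicate k 1) f x" for k
  proof (induction k)
    case (Suc k)
    show ?case
    proof
      fix x assume x: "x \<in> U"
      have "nderiv (Suc k) f x = vderiv (dderivs (replicate k 1) f) x"
        unfolding nderiv_Suc using Suc by (intro vderiv_transform_within_open[OF U x]) auto
      also have "\<dots> = dderivs (replicate (Suc k) 1) f x"
        using frechet_derivative_eq_vector_derivative[OF d[OF x]] by (simp add: vderiv_def)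
      finally show "nderiv (Suc k) f x = dderivs (replicate (Suc k) 1) f x" .
    qed
  qed simp
  have "nderiv k f differentiable (at x)" if "x \<in> U" for k x
    using eq that by (intro differentiable_transform_within_open[OF U that _ d[OF that]]) auto
  then show "open U \<and> smooth_curve_on U f"
    using U unfolding smooth_curve_on_def Ck_on_def by blast
qed

lemma smooth_on_differentiable: "smooth_on V G \<Longrightarrow> p \<in> V \<Longrightarrow> G differentiable (at p)"
  unfolding smooth_on_def using dderivs.simps(1) by metis

lemma smooth_on_imp_continuous_on: "smooth_on U f \<Longrightarrow> continuous_on U f"
  by (intro differentiable_imp_continuous_on)
    (auto simp: differentiable_on_def intro: differentiable_at_withinI smooth_on_differentiable)

lemma smooth_on_open_vimage: "smooth_on U f \<Longrightarrow> open B \<Longrightarrow> open (f -` B \<inter> U)"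
  using smooth_on_imp_continuous_on continuous_on_open_vimage smooth_on_def by blast

definition partial1 :: "(real \<times> real \<Rightarrow> 'b::real_normed_vector) \<Rightarrow> real \<times> real \<Rightarrow> 'b" where
  "partial1 G = dderivs [(1, 0)] G"

definition partial2 :: "(real \<times> real \<Rightarrow> 'b::real_normed_vector) \<Rightarrow> real \<times> real \<Rightarrow> 'b" where
  "partial2 G = dderivs [(0, 1)] G"

lemma dderivs_append: "dderivs vs (dderivs ws G) = dderivs (vs @ ws) G"
  by (induction vs) simp_all

lemma smooth_on_partials: "smooth_on V G \<Longrightarrow> smooth_on V (partial1 G) \<and> smooth_on V (partial2 G)"
  unfolding smooth_on_def partial1_def partial2_def dderivs_append by blast

lemma frechet_derivative_partials:
  assumes "G differentiable (at p)"
  shows "frechet_derivative G (at p) v = fst v *\<^sub>R partial1 G p + snd v *\<^sub>R partial2 G p"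
proof -
  have l: "linear (frechet_derivative G (at p))"
    using assms frechet_derivative_works has_derivative_linear by blast
  have "v = fst v *\<^sub>R (1, 0) + snd v *\<^sub>R (0, 1)" by (cases v) simp
  then have "frechet_derivative G (at p) v =
      frechet_derivative G (at p) (fst v *\<^sub>R (1, 0) + snd v *\<^sub>R (0, 1))"
    by simp
  also have "\<dots> = fst v *\<^sub>R frechet_derivative G (at p) (1, 0) + snd v *\<^sub>R frechet_derivative G (at p) (0, 1)"
    by (simp only: linear_add[OF l] linear_scale[OF l])
  finally show ?thesis unfolding partial1_def partial2_def by simp
qed

lemma has_vector_derivative_compose_plane:
  assumes "c differentiable (at y)" "G differentiable (at (c y))"
  shows "((\<lambda>t. G (c t)) has_vector_derivative frechet_derivative G (at (c y)) (vderiv c y)) (at y)"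
proof -
  let ?D = "frechet_derivative G (at (c y))"
  have hG: "(G has_derivative ?D) (at (c y))" using assms(2) frechet_derivative_works by blast
  have "(c has_derivative (\<lambda>h. h *\<^sub>R vderiv c y)) (at y)"
    using vderiv_works[OF assms(1)] unfolding has_vector_derivative_def .
  from diff_chain_at[OF this hG] have "((\<lambda>t. G (c t)) has_derivative (\<lambda>h. ?D (h *\<^sub>R vderiv c y))) (at y)"
    by (simp add: o_def)
  then show ?thesis
    using linear_scale[OF has_derivative_linear[OF hG]] unfolding has_vector_derivative_def by simp
qed

lemma vderiv_compose_plane:
  fixes G :: "real \<times> real \<Rightarrow> 'b::real_normed_vector"
  assumes "smooth_curve_on U c" "c ` U \<subseteq> V" "smooth_on V G" "y \<in> U"
  shows "vderiv (\<lambda>t. G (c t)) y =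
    fst (vderiv c y) *\<^sub>R partial1 G (c y) + snd (vderiv c y) *\<^sub>R partial2 G (c y)"
proof -
  have dG: "G differentiable (at (c y))" using assms smooth_on_differentiable by blast
  show ?thesis
    using vderiv_eqI[OF has_vector_derivative_compose_plane[OF
          smooth_curve_on_differentiable[OF assms(1,4)] dG]] frechet_derivative_partials[OF dG]
    by simp
qed

lemma smooth_curve_on_compose_plane:
  fixes G :: "real \<times> real \<Rightarrow> 'b::real_normed_vector"
  assumes "open U" "smooth_curve_on U c" "c ` U \<subseteq> V" "smooth_on V G"
  shows "smooth_curve_on U (\<lambda>t. G (c t))"
proof -
  have "smooth_curve_on U (\<lambda>y. fst (vderiv c y))" "smooth_curve_on U (\<lambda>y. snd (vderiv c y))"
    using smooth_curve_on_bounded_linear[OF assms(1) _ smooth_curve_on_vderiv[OF assms(2)]]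
      bounded_linear_fst bounded_linear_snd by blast+
  then have "Ck_on k U (\<lambda>t. G (c t))" if "smooth_on V G" for k
    using that
  proof (induction k arbitrary: G)
    case (Suc k)
    have "Ck_on k U (\<lambda>y. fst (vderiv c y) *\<^sub>R partial1 G (c y) + snd (vderiv c y) *\<^sub>R partial2 G (c y))"
      using Suc smooth_on_partials[OF Suc.prems(3)]
      by (intro Ck_on_add[OF assms(1)] Ck_on_scaleR[OF assms(1)]) (auto simp: smooth_curve_on_def)
    moreover have "((\<lambda>t. G (c t)) has_vector_derivative
        fst (vderiv c y) *\<^sub>R partial1 G (c y) + snd (vderiv c y) *\<^sub>R partial2 G (c y)) (at y)" if "y \<in> U" for y
    proof -
      have dG: "G differentiable (at (c y))"
        using smooth_on_differentiable[OF Suc.prems(3)] assms(3) that by blast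
      show ?thesis
        using has_vector_derivative_compose_plane[OF smooth_curve_on_differentiable[OF assms(2) that] dG]
        unfolding frechet_derivative_partials[OF dG] .
    qed
    ultimately show ?case by (intro Ck_on_Suc_via_vderiv[OF assms(1)])
  qed simp
  then show ?thesis using assms(4) unfolding smooth_curve_on_def by blast
qed

lemma vanishes_to_order_compose_plane:
  fixes H :: "real \<times> real \<Rightarrow> 'b::real_normed_vector"
  assumes "open U" "0 \<in> U" "smooth_curve_on U c" "c ` U \<subseteq> V" "smooth_on V H"
    and "vanishes_to_order m (vderiv c)"
  shows "vanishes_to_order (Suc m) (\<lambda>y. H (c y) - H (c 0))"
proof -
  have a: "smooth_curve_on U (\<lambda>y. fst (vderiv c y))" "smooth_curve_on U (\<lambda>y. snd (vderiv c y))"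
    "vanishes_to_order m (\<lambda>y. fst (vderiv c y))" "vanishes_to_order m (\<lambda>y. snd (vderiv c y))"
    using smooth_curve_on_bounded_linear[OF assms(1) _ smooth_curve_on_vderiv[OF assms(3)]]
      vanishes_to_order_bounded_linear[OF assms(1,2) _ smooth_curve_on_vderiv[OF assms(3)] assms(6)]
      bounded_linear_fst bounded_linear_snd by blast+
  have p: "smooth_curve_on U (\<lambda>y. partial1 H (c y))" "smooth_curve_on U (\<lambda>y. partial2 H (c y))"
    using smooth_curve_on_compose_plane[OF assms(1,3,4)] smooth_on_partials[OF assms(5)] by blast+
  have "vanishes_to_order (m + 0) (\<lambda>y. fst (vderiv c y) *\<^sub>R partial1 H (c y))"
    "vanishes_to_order (m + 0) (\<lambda>y. snd (vderiv c y) *\<^sub>R partial2 H (c y))"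
    by (rule vanishes_to_order_scaleR(1)[OF assms(1,2) a(1) p(1) a(3) vanishes_to_order_0],
        rule vanishes_to_order_scaleR(1)[OF assms(1,2) a(2) p(2) a(4) vanishes_to_order_0])
  then have "vanishes_to_order m
      (\<lambda>y. fst (vderiv c y) *\<^sub>R partial1 H (c y) + snd (vderiv c y) *\<^sub>R partial2 H (c y))"
    using vanishes_to_order_add[OF assms(1,2) smooth_curve_on_scaleR[OF assms(1) a(1) p(1)]
        smooth_curve_on_scaleR[OF assms(1) a(2) p(2)]] by simp
  moreover have "vderiv (\<lambda>y. H (c y) - H (c 0)) y =
      fst (vderiv c y) *\<^sub>R partial1 H (c y) + snd (vderiv c y) *\<^sub>R partial2 H (c y)" if "y \<in> U" for y
    using vderiv_compose_plane[OF assms(3-5) that]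
      smooth_curve_on_differentiable[OF smooth_curve_on_compose_plane[OF assms(1,3-5)] that]
    by (simp add: vderiv_def)
  ultimately have "vanishes_to_order m (vderiv (\<lambda>y. H (c y) - H (c 0)))"
    using vanishes_to_order_transform_within_open[OF assms(1,2)] by (metis (no_types, lifting))
  then show ?thesis by (simp add: vanishes_to_order_Suc)
qed

text \<open>Writing \<open>(G \<circ> c)' = DG(c(0)) c' + (DG(c) - DG(c(0))) c'\<close> splits off the linear part of \<open>G\<close>;
  if \<open>c'\<close> vanishes to order \<open>m\<close>, the second summand vanishes to order \<open>2m + 1\<close>.\<close>

lemma nderiv_compose_plane_at_0:
  fixes G :: "real \<times> real \<Rightarrow> 'b::real_normed_vector"
  assumes "open U" "0 \<in> U" "smooth_curve_on U c" "c ` U \<subseteq> V" "smooth_on V G"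
    and "vanishes_to_order m (vderiv c)" "1 \<le> k" "k \<le> 2 * m + 1"
  shows "nderiv k (\<lambda>t. G (c t)) 0 = frechet_derivative G (at (c 0)) (nderiv k c 0)"
proof -
  obtain j where k: "k = Suc j" and j: "j < m + Suc m" using assms(7,8) by (cases k) auto
  define D where "D = frechet_derivative G (at (c 0))"
  have dG: "G differentiable (at (c 0))" using smooth_on_differentiable[OF assms(5)] assms(2,4) by blast
  then have D: "bounded_linear D" "\<And>v. D v = fst v *\<^sub>R partial1 G (c 0) + snd v *\<^sub>R partial2 G (c 0)"
    unfolding D_def using frechet_derivative_works has_derivative_bounded_linear frechet_derivative_partials
    by blast+
  have partials: "smooth_on V (partial1 G)" "smooth_on V (partial2 G)"
    using smooth_on_partials[OF assms(5)] by auto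
  define E where "E = (\<lambda>y. fst (vderiv c y) *\<^sub>R (partial1 G (c y) - partial1 G (c 0)) +
      snd (vderiv c y) *\<^sub>R (partial2 G (c y) - partial2 G (c 0)))"
  have a: "smooth_curve_on U (\<lambda>y. fst (vderiv c y))" "smooth_curve_on U (\<lambda>y. snd (vderiv c y))"
    "vanishes_to_order m (\<lambda>y. fst (vderiv c y))" "vanishes_to_order m (\<lambda>y. snd (vderiv c y))"
    using smooth_curve_on_bounded_linear[OF assms(1) _ smooth_curve_on_vderiv[OF assms(3)]]
      vanishes_to_order_bounded_linear[OF assms(1,2) _ smooth_curve_on_vderiv[OF assms(3)] assms(6)]
      bounded_linear_fst bounded_linear_snd by blast+
  have r: "smooth_curve_on U (\<lambda>y. partial1 G (c y) - partial1 G (c 0))"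
    "smooth_curve_on U (\<lambda>y. partial2 G (c y) - partial2 G (c 0))"
    "vanishes_to_order (Suc m) (\<lambda>y. partial1 G (c y) - partial1 G (c 0))"
    "vanishes_to_order (Suc m) (\<lambda>y. partial2 G (c y) - partial2 G (c 0))"
    using smooth_curve_on_diff[OF assms(1) smooth_curve_on_compose_plane[OF assms(1,3,4)]
        smooth_curve_on_const] partials
      vanishes_to_order_compose_plane[OF assms(1-4) _ assms(6)] by blast+
  have s: "smooth_curve_on U (\<lambda>y. fst (vderiv c y) *\<^sub>R (partial1 G (c y) - partial1 G (c 0)))"
    "smooth_curve_on U (\<lambda>y. snd (vderiv c y) *\<^sub>R (partial2 G (c y) - partial2 G (c 0)))"
    using smooth_curve_on_scaleR[OF assms(1) a(1) r(1)] smooth_curve_on_scaleR[OF assms(1) a(2) r(2)] .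
  have E: "smooth_curve_on U E" "vanishes_to_order (m + Suc m) E"
    unfolding E_def using smooth_curve_on_add[OF assms(1) s]
      vanishes_to_order_add[OF assms(1,2) s vanishes_to_order_scaleR(1)[OF assms(1,2) a(1) r(1) a(3) r(3)]
        vanishes_to_order_scaleR(1)[OF assms(1,2) a(2) r(2) a(4) r(4)]] by simp_all
  have DC: "smooth_curve_on U (\<lambda>y. D (vderiv c y))"
    by (rule smooth_curve_on_bounded_linear[OF assms(1) D(1) smooth_curve_on_vderiv[OF assms(3)]])
  have "vderiv (\<lambda>t. G (c t)) y = D (vderiv c y) + E y" if "y \<in> U" for y
    unfolding vderiv_compose_plane[OF assms(3-5) that] E_def D(2) by (simp add: algebra_simps)
  then have "nderiv k (\<lambda>t. G (c t)) 0 = nderiv j (\<lambda>y. D (vderiv c y) + E y) 0"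
    unfolding k by (rule nderiv_Suc_transform_within_open[OF assms(1,2)])
  also have "\<dots> = D (nderiv j (vderiv c) 0) + nderiv j E 0"
    by (simp add: nderiv_add[OF assms(1) DC E(1) assms(2)]
        nderiv_bounded_linear[OF assms(1) D(1) smooth_curve_on_vderiv[OF assms(3)] assms(2)])
  also have "nderiv j E 0 = 0" using E(2) j unfolding vanishes_to_order_def by blast
  finally show ?thesis unfolding D_def k nderiv_Suc_right by simp
qed

lemma det2_linear:
  assumes "linear D"
  shows "det2 (D u) (D v) = det2 u v * det2 (D (1, 0)) (D (0, 1))"
proof -
  have Dw: "D w = fst w *\<^sub>R D (1, 0) + snd w *\<^sub>R D (0, 1)" for w
  proof -
    have "w = fst w *\<^sub>R (1, 0) + snd w *\<^sub>R (0, 1)" by (cases w) simp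
    then have "D w = D (fst w *\<^sub>R (1, 0) + snd w *\<^sub>R (0, 1))" by simp
    then show ?thesis by (simp only: linear_add[OF assms] linear_scale[OF assms])
  qed
  show ?thesis unfolding det2_def by (simp only: Dw[of u] Dw[of v]) (simp add: algebra_simps)
qed

lemma det2_nonzero_if_left_inverse:
  fixes D E :: "real \<times> real \<Rightarrow> real \<times> real"
  assumes "linear D" "linear E" "\<And>w. E (D w) = w"
  shows "det2 (D (1, 0)) (D (0, 1)) \<noteq> 0"
proof -
  have "det2 (D (1, 0)) (D (0, 1)) * det2 (E (1, 0)) (E (0, 1)) = 1"
    using det2_linear[OF assms(2), of "D (1, 0)" "D (0, 1)"] by (simp add: assms(3) det2_def)
  then show ?thesis by auto
qed

lemma frechet_derivative_left_inverse:
  assumes "open U" "p \<in> U" "f differentiable (at p)" "g differentiable (at (f p))"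
    and "\<And>x. x \<in> U \<Longrightarrow> g (f x) = x"
  shows "frechet_derivative g (at (f p)) (frechet_derivative f (at p) w) = w"
proof -
  let ?Dg = "frechet_derivative g (at (f p))" and ?Df = "frechet_derivative f (at p)"
  have "((\<lambda>x. g (f x)) has_derivative (\<lambda>w. ?Dg (?Df w))) (at p)"
    using diff_chain_at[OF frechet_derivative_works[THEN iffD1, OF assms(3)]
        frechet_derivative_works[THEN iffD1, OF assms(4)]] by (simp add: o_def)
  moreover have "((\<lambda>x. g (f x)) has_derivative (\<lambda>w. w)) (at p)"
    using assms(5) by (intro has_derivative_transform_within_open[OF has_derivative_ident assms(1,2)]) auto
  ultimately have "(\<lambda>w. ?Dg (?Df w)) = (\<lambda>w. w)" by (rule has_derivative_unique)
  then show ?thesis by (rule fun_cong)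
qed

lemma det2_frechet_derivative_nonzero:
  fixes G \<Psi> :: "real \<times> real \<Rightarrow> real \<times> real"
  assumes "open V" "y \<in> V" "G differentiable (at y)" "\<Psi> differentiable (at (G y))"
    and "\<And>y. y \<in> V \<Longrightarrow> \<Psi> (G y) = y"
  shows "det2 (frechet_derivative G (at y) (1, 0)) (frechet_derivative G (at y) (0, 1)) \<noteq> 0"
  using frechet_derivative_works has_derivative_linear assms(3,4) frechet_derivative_left_inverse[OF assms]
  by (intro det2_nonzero_if_left_inverse[where E = "frechet_derivative \<Psi> (at (G y))"]) blast+

lemma vderiv_nonzero_if_left_inverse:
  fixes f g :: "real \<Rightarrow> real"
  assumes "open U" "p \<in> U" "f differentiable (at p)" "g differentiable (at (f p))"
    and "\<And>x. x \<in> U \<Longrightarrow> g (f x) = x"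
  shows "vderiv f p \<noteq> 0"
proof -
  have "vderiv (\<lambda>x. g (f x)) p = vderiv f p * vderiv g (f p)"
    using vderiv_compose[OF assms(3,4)] by simp
  moreover have "vderiv (\<lambda>x. g (f x)) p = 1"
  proof -
    have "vderiv (\<lambda>x. x) p = (1::real)"
      by (rule vderiv_eqI) (simp add: has_real_derivative_iff_has_vector_derivative[symmetric])
    then show ?thesis
      using vderiv_transform_within_open[OF assms(1,2), of "\<lambda>x. g (f x)" "\<lambda>x. x"] assms(5) by simp
  qed
  ultimately show ?thesis by auto
qed

lemma diffeo_germD:
  assumes "diffeo_germ f p q"
  obtains U V g where "open U" "p \<in> U" "f p = q" "smooth_on U f" "open V" "smooth_on V g" "f ` U = V"
    "\<And>x. x \<in> U \<Longrightarrow> g (f x) = x" "\<And>y. y \<in> V \<Longrightarrow> f (g y) = y"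
  using assms unfolding diffeo_germ_def smooth_on_def by blast

section \<open>Necessity of the jet conditions\<close>

lemma nderiv_normal_form_compose:
  fixes \<psi> :: "real \<Rightarrow> real" and h :: "real \<Rightarrow> real \<times> real"
  assumes "open U" "0 \<in> U" "smooth_curve_on U \<psi>" "\<psi> 0 = 0" "\<psi> ` U \<subseteq> J"
    and "open J" "smooth_curve_on J h" "vanishes_to_order (n + 2) h"
  defines "c \<equiv> \<lambda>t. (\<psi> t ^ n, \<psi> t ^ (n + 1)) + h (\<psi> t)"
  shows "smooth_curve_on U c" "vanishes_to_order n c"
    "nderiv n c 0 = (fact n * vderiv \<psi> 0 ^ n, 0)"
    "snd (nderiv (n + 1) c 0) = fact (n + 1) * vderiv \<psi> 0 ^ (n + 1)"
proof -
  note pow = nderiv_power_compose_at_0[OF assms(1-4)]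
  have p: "smooth_curve_on U (\<lambda>t. \<psi> t ^ k *\<^sub>R v)"
    "nderiv j (\<lambda>t. \<psi> t ^ k *\<^sub>R v) 0 = nderiv j (\<lambda>t. \<psi> t ^ k) 0 *\<^sub>R v" for k j and v :: "real \<times> real"
    using smooth_curve_on_bounded_linear[OF assms(1) bounded_linear_scaleR_left]
      nderiv_bounded_linear[OF assms(1) bounded_linear_scaleR_left _ assms(2)] pow by blast+
  have s3: "smooth_curve_on U (\<lambda>t. h (\<psi> t))" by (rule smooth_curve_on_compose[OF assms(1,6,7,3,5)])
  have v3: "vanishes_to_order (n + 2) (\<lambda>t. h (\<psi> t))"
    by (rule vanishes_to_order_compose[OF assms(1,6,2,3,5,4,7,8)])
  have c: "c = (\<lambda>t. (\<psi> t ^ n *\<^sub>R (1, 0) + \<psi> t ^ (n + 1) *\<^sub>R (0, 1)) + h (\<psi> t))"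
    unfolding c_def by (simp add: fun_eq_iff)
  have nd: "nderiv j c 0 = nderiv j (\<lambda>t. \<psi> t ^ n) 0 *\<^sub>R (1, 0) +
      nderiv j (\<lambda>t. \<psi> t ^ (n + 1)) 0 *\<^sub>R (0, 1) + nderiv j (\<lambda>t. h (\<psi> t)) 0" for j
    unfolding c nderiv_add[OF assms(1) smooth_curve_on_add[OF assms(1) p(1) p(1)] s3 assms(2)]
      nderiv_add[OF assms(1) p(1) p(1) assms(2)] p(2) ..
  have low: "nderiv j (\<lambda>t. \<psi> t ^ n) 0 = 0" "nderiv j (\<lambda>t. \<psi> t ^ (n + 1)) 0 = 0"
    "nderiv j (\<lambda>t. h (\<psi> t)) 0 = 0" if "j < n" for j
    using pow[of n] pow[of "n + 1"] v3 that unfolding vanishes_to_order_def by auto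
  show "smooth_curve_on U c" unfolding c
    by (intro smooth_curve_on_add[OF assms(1)] p(1) s3)
  show "vanishes_to_order n c"
    unfolding vanishes_to_order_def nd using low by (simp add: zero_prod_def)
  show "nderiv n c 0 = (fact n * vderiv \<psi> 0 ^ n, 0)"
    using pow[of n] pow[of "n + 1"] v3 unfolding nd vanishes_to_order_def by simp
  show "snd (nderiv (n + 1) c 0) = fact (n + 1) * vderiv \<psi> 0 ^ (n + 1)"
    using pow[of "n + 1"] v3 unfolding nd vanishes_to_order_def by simp
qed

lemma cusp_jet_compose_plane:
  fixes G :: "real \<times> real \<Rightarrow> real \<times> real"
  assumes "n \<ge> 2" "open U" "0 \<in> U" "smooth_curve_on U c" "c ` U \<subseteq> V" "smooth_on V G"
    and "det2 (frechet_derivative G (at (c 0)) (1, 0)) (frechet_derivative G (at (c 0)) (0, 1)) \<noteq> 0"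
    and "vanishes_to_order n c" "det2 (nderiv n c 0) (nderiv (n + 1) c 0) \<noteq> 0"
    and "\<And>t. t \<in> U \<Longrightarrow> \<gamma> t = G (c t)"
  shows "(\<forall>k\<in>{1..n-1}. nderiv k \<gamma> 0 = 0) \<and> det2 (nderiv n \<gamma> 0) (nderiv (n + 1) \<gamma> 0) \<noteq> 0"
proof -
  define D where "D = frechet_derivative G (at (c 0))"
  have "G differentiable (at (c 0))" using smooth_on_differentiable[OF assms(6)] assms(3,5) by blast
  then have "linear D"
    unfolding D_def using frechet_derivative_works has_derivative_linear by blast
  have "vanishes_to_order (Suc (n - 1)) c" using assms(1,8) by simp
  then have "vanishes_to_order (n - 1) (vderiv c)" by (simp add: vanishes_to_order_Suc)
  then have \<gamma>: "nderiv k \<gamma> 0 = D (nderiv k c 0)" if "1 \<le> k" "k \<le> n + 1" for k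
    using nderiv_transform_within_open[OF assms(2) assms(10) assms(3)] that assms(1)
      nderiv_compose_plane_at_0[OF assms(2-6), of "n - 1" k] unfolding D_def by simp
  have "nderiv k \<gamma> 0 = 0" if "k \<in> {1..n-1}" for k
    using \<gamma>[of k] that assms(8) linear_0[OF \<open>linear D\<close>] unfolding vanishes_to_order_def by auto
  moreover have "det2 (nderiv n \<gamma> 0) (nderiv (n + 1) \<gamma> 0) \<noteq> 0"
    using \<gamma>[of n] \<gamma>[of "n + 1"] assms(1,7,9)
      det2_linear[OF \<open>linear D\<close>, of "nderiv n c 0" "nderiv (n + 1) c 0"]
    unfolding D_def by simp
  ultimately show ?thesis by blast
qed

lemma cusp_jet_if_A_equiv_normal_form:
  fixes \<gamma> h :: "real \<Rightarrow> real \<times> real"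
  assumes "n \<ge> 2" "smooth_on I \<gamma>" "0 \<in> I" "0 \<in> J" "smooth_on J h" "\<forall>k\<le>n + 2. nderiv k h 0 = 0"
    and "A_equiv_at0 \<gamma> (\<lambda>t. (t ^ n, t ^ (n + 1)) + h t)"
  shows "(\<forall>k\<in>{1..n-1}. nderiv k \<gamma> 0 = 0) \<and> det2 (nderiv n \<gamma> 0) (nderiv (n + 1) \<gamma> 0) \<noteq> 0"
proof -
  obtain \<psi> \<Psi> W where germs: "diffeo_germ \<psi> 0 0" "diffeo_germ \<Psi> (\<gamma> 0) ((0 ^ n, 0 ^ (n + 1)) + h 0)"
    and W: "open W" "0 \<in> W" "\<And>s. s \<in> W \<Longrightarrow> \<Psi> (\<gamma> s) = (\<psi> s ^ n, \<psi> s ^ (n + 1)) + h (\<psi> s)"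
    using assms(7) unfolding A_equiv_at0_def by blast
  obtain U1 V1 g1 where U1: "open U1" "0 \<in> U1" "\<psi> 0 = 0" "smooth_on U1 \<psi>" "smooth_on V1 g1"
    "\<psi> ` U1 = V1" "\<And>x. x \<in> U1 \<Longrightarrow> g1 (\<psi> x) = x"
    using diffeo_germD[OF germs(1)] by metis
  obtain U2 V2 G where U2: "open U2" "\<gamma> 0 \<in> U2" "smooth_on U2 \<Psi>" "open V2" "smooth_on V2 G"
    "\<Psi> ` U2 = V2" "\<And>x. x \<in> U2 \<Longrightarrow> G (\<Psi> x) = x" "\<And>y. y \<in> V2 \<Longrightarrow> \<Psi> (G y) = y"
    using diffeo_germD[OF germs(2)] by metis
  have J: "open J" "smooth_curve_on J h" and \<gamma>: "open I" "smooth_curve_on I \<gamma>"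
    using assms(2,5) smooth_on_iff_smooth_curve_on by auto
  define U where "U = (\<psi> -` J \<inter> U1) \<inter> (\<gamma> -` U2 \<inter> I) \<inter> W"
  have U: "open U" "0 \<in> U" "U \<subseteq> U1" "\<psi> ` U \<subseteq> J"
    unfolding U_def using smooth_on_open_vimage[OF U1(4) J(1)] smooth_on_open_vimage[OF assms(2) U2(1)]
      W(1,2) U1(2,3) U2(2) assms(3,4) by auto
  have \<psi>: "smooth_curve_on U \<psi>"
    using U1(4) U(3) smooth_on_iff_smooth_curve_on smooth_curve_on_subset by blast
  have h: "vanishes_to_order (n + 2) h" using assms(6) unfolding vanishes_to_order_def by simp
  define c where "c = (\<lambda>t. (\<psi> t ^ n, \<psi> t ^ (n + 1)) + h (\<psi> t))"
  note c = nderiv_normal_form_compose[OF U(1,2) \<psi> U1(3) U(4) J h, folded c_def]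
  have \<gamma>U: "\<gamma> t \<in> U2" "c t = \<Psi> (\<gamma> t)" if "t \<in> U" for t
    using that W(3) unfolding U_def c_def by auto
  then have cV: "c ` U \<subseteq> V2" and \<gamma>G: "\<And>t. t \<in> U \<Longrightarrow> \<gamma> t = G (c t)"
    using U2(6,7) by auto
  have c0: "c 0 \<in> V2" "G (c 0) \<in> U2" using cV \<gamma>G U(2) U2(2) by auto
  have dG: "G differentiable (at (c 0))" and d\<Psi>: "\<Psi> differentiable (at (G (c 0)))"
    using smooth_on_differentiable[OF U2(5) c0(1)] smooth_on_differentiable[OF U2(3) c0(2)] .
  have "det2 (frechet_derivative G (at (c 0)) (1, 0)) (frechet_derivative G (at (c 0)) (0, 1)) \<noteq> 0"
    by (rule det2_frechet_derivative_nonzero[OF U2(4) c0(1) dG d\<Psi> U2(8)])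
  moreover have "\<psi> 0 \<in> V1" using U1(2,6) by blast
  then have "vderiv \<psi> 0 \<noteq> 0"
    by (rule vderiv_nonzero_if_left_inverse[OF U1(1,2) smooth_on_differentiable[OF U1(4) U1(2)]
          smooth_on_differentiable[OF U1(5)] U1(7)])
  then have "det2 (nderiv n c 0) (nderiv (n + 1) c 0) \<noteq> 0"
    using c(3,4) by (simp add: det2_def)
  ultimately show ?thesis
    by (rule cusp_jet_compose_plane[OF assms(1) U(1,2) c(1) cV U2(5) _ c(2) _ \<gamma>G])
qed

lemma smooth_curve_on_inverse: "smooth_curve_on (- {0}) (\<lambda>x::real. inverse x)"
proof -
  have U: "open (- {0::real})" by auto
  have d: "((\<lambda>x. inverse x) has_vector_derivative - (inverse x *\<^sub>R inverse x)) (at x)"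
    if "x \<in> - {0}" for x :: real
    using DERIV_inverse[of x UNIV] that
    unfolding has_real_derivative_iff_has_vector_derivative by (simp add: power2_eq_square)
  have "Ck_on k (- {0}) (\<lambda>x::real. inverse x)" for k
  proof (induction k)
    case (Suc k)
    show ?case
      using Ck_on_Suc_via_vderiv[OF U d Ck_on_bounded_linear[OF U
            bounded_linear_minus[OF bounded_linear_ident] Ck_on_scaleR[OF U Suc.IH Suc.IH]]] .
  qed simp
  then show ?thesis unfolding smooth_curve_on_def by blast
qed

lemma has_vector_derivative_the_inv_into:
  fixes \<phi> :: "real \<Rightarrow> real"
  assumes "open B" "open (\<phi> ` B)" "\<And>t. t \<in> B \<Longrightarrow> \<phi> differentiable (at t)" "inj_on \<phi> B"
    and "y \<in> \<phi> ` B" "vderiv \<phi> (the_inv_into B \<phi> y) \<noteq> 0"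
  shows "(the_inv_into B \<phi> has_vector_derivative inverse (vderiv \<phi> (the_inv_into B \<phi> y))) (at y)"
proof -
  let ?\<psi> = "the_inv_into B \<phi>"
  have \<phi>\<psi>: "\<phi> (?\<psi> z) = z" "?\<psi> z \<in> B" if "z \<in> \<phi> ` B" for z
    using f_the_inv_into_f[OF assms(4) that] the_inv_into_into[OF assms(4) that] by auto
  obtain \<delta> where \<delta>: "\<delta> > 0" "cball (?\<psi> y) \<delta> \<subseteq> B"
    using assms(1) \<phi>\<psi>(2)[OF assms(5)] open_contains_cball by blast
  have "isCont ?\<psi> (\<phi> (?\<psi> y))"
  proof (rule isCont_inverse_function[where f = \<phi> and x = "?\<psi> y", OF \<delta>(1)])
    fix z assume "\<bar>z - ?\<psi> y\<bar> \<le> \<delta>"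
    then have z: "z \<in> B" using \<delta>(2) by (auto simp: dist_real_def abs_minus_commute)
    show "?\<psi> (\<phi> z) = z" using the_inv_into_f_f[OF assms(4) z] .
    show "isCont \<phi> z" using assms(3)[OF z] differentiable_imp_continuous_within by blast
  qed
  then have "isCont ?\<psi> y" using \<phi>\<psi>[OF assms(5)] by simp
  moreover obtain \<epsilon> where "\<epsilon> > 0" "ball y \<epsilon> \<subseteq> \<phi> ` B" using assms(2,5) open_contains_ball by blast
  moreover have "DERIV \<phi> (?\<psi> y) :> vderiv \<phi> (?\<psi> y)"
    using vderiv_works[OF assms(3)[OF \<phi>\<psi>(2)[OF assms(5)]]]
    unfolding has_real_derivative_iff_has_vector_derivative .
  ultimately have "DERIV ?\<psi> y :> inverse (vderiv \<phi> (?\<psi> y))"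
    using \<phi>\<psi>(1) assms(6)
    by (intro DERIV_inverse_function[where a = "y - \<epsilon>" and b = "y + \<epsilon>"])
      (auto simp: subset_iff dist_real_def)
  then show ?thesis unfolding has_real_derivative_iff_has_vector_derivative .
qed

lemma smooth_curve_on_the_inv_into:
  fixes \<phi> :: "real \<Rightarrow> real"
  assumes "open B" "open (\<phi> ` B)" "smooth_curve_on B \<phi>" "\<And>t. t \<in> B \<Longrightarrow> vderiv \<phi> t \<noteq> 0"
    and "inj_on \<phi> B"
  shows "smooth_curve_on (\<phi> ` B) (the_inv_into B \<phi>)"
proof -
  let ?\<psi> = "the_inv_into B \<phi>"
  have \<psi>B: "?\<psi> ` (\<phi> ` B) \<subseteq> B" using the_inv_into_into[OF assms(5)] by blast
  have "smooth_curve_on B (\<lambda>t. inverse (vderiv \<phi> t))"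
    using assms(4) by (intro smooth_curve_on_compose[OF assms(1) _ smooth_curve_on_inverse
          smooth_curve_on_vderiv[OF assms(3)]]) auto
  then have "Ck_on k B (\<lambda>t. inverse (vderiv \<phi> t))" for k unfolding smooth_curve_on_def by blast
  then have "Ck_on k (\<phi> ` B) ?\<psi>" for k
  proof (induction k)
    case (Suc k)
    have "Ck_on k (\<phi> ` B) (\<lambda>y. inverse (vderiv \<phi> (?\<psi> y)))"
      by (rule Ck_on_compose[OF assms(2,1) Suc.prems Suc.IH[OF Suc.prems] \<psi>B])
    moreover have "(?\<psi> has_vector_derivative inverse (vderiv \<phi> (?\<psi> y))) (at y)" if "y \<in> \<phi> ` B" for y
      using has_vector_derivative_the_inv_into[OF assms(1,2) smooth_curve_on_differentiable[OF assms(3)]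
          assms(5) that] assms(4) \<psi>B that by blast
    ultimately show ?case by (intro Ck_on_Suc_via_vderiv[OF assms(2)])
  qed simp
  then show ?thesis unfolding smooth_curve_on_def by blast
qed

lemma inj_on_if_vderiv_nonzero:
  fixes \<phi> :: "real \<Rightarrow> real"
  assumes "convex B" "\<And>t. t \<in> B \<Longrightarrow> \<phi> differentiable (at t)" "\<And>t. t \<in> B \<Longrightarrow> vderiv \<phi> t \<noteq> 0"
  shows "inj_on \<phi> B"
proof -
  have D: "(\<phi> has_derivative (\<lambda>v. v *\<^sub>R vderiv \<phi> z)) (at z)" if "z \<in> B" for z
    using vderiv_works[OF assms(2)[OF that]] unfolding has_vector_derivative_def .
  have "\<phi> x \<noteq> \<phi> y" if xy: "x \<in> B" "y \<in> B" "x < y" for x y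
  proof
    assume "\<phi> x = \<phi> y"
    have sub: "{x..y} \<subseteq> B"
      using closed_segment_subset[OF xy(1,2) assms(1)] xy(3) by (simp add: closed_segment_eq_real_ivl)
    have "continuous_on {x..y} \<phi>"
      using sub by (intro continuous_at_imp_continuous_on ballI has_derivative_continuous[OF D]) auto
    then obtain z where z: "x < z" "z < y" "(\<lambda>v. v *\<^sub>R vderiv \<phi> z) = (\<lambda>v. 0)"
      using Rolle_deriv[where f' = "\<lambda>z v. v *\<^sub>R vderiv \<phi> z", OF xy(3) \<open>\<phi> x = \<phi> y\<close>] D sub
      by (metis atLeastAtMost_iff less_eq_real_def subsetD)
    then have "vderiv \<phi> z = 0" by (metis scale_one)
    moreover have "z \<in> B" using sub z(1,2) by auto
    ultimately show False using assms(3) by blast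
  qed
  then show ?thesis by (intro inj_onI) (metis linorder_neqE_linordered_idom)
qed

lemma real_local_inverse:
  fixes \<phi> :: "real \<Rightarrow> real"
  assumes "open U" "0 \<in> U" "smooth_curve_on U \<phi>" "\<phi> 0 = 0" "vderiv \<phi> 0 \<noteq> 0"
  obtains B W \<psi> where "open B" "0 \<in> B" "B \<subseteq> U" "open W" "0 \<in> W" "diffeo_germ \<psi> 0 0"
    "\<psi> ` W = B" "\<And>s. s \<in> W \<Longrightarrow> \<phi> (\<psi> s) = s"
proof -
  have "continuous (at 0) (vderiv \<phi>)"
    using smooth_curve_on_differentiable[OF smooth_curve_on_vderiv[OF assms(3)] assms(2)]
      differentiable_imp_continuous_within by blast
  then obtain \<epsilon> where "\<epsilon> > 0" "\<And>y. dist 0 y < \<epsilon> \<Longrightarrow> vderiv \<phi> y \<noteq> 0"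
    using continuous_at_avoid[of 0 "vderiv \<phi>" 0] assms(5) by blast
  moreover obtain \<delta> where "\<delta> > 0" "ball 0 \<delta> \<subseteq> U" using open_contains_ball assms(1,2) by blast
  ultimately obtain B where B: "open B" "0 \<in> B" "B \<subseteq> U" "convex B" "\<And>t. t \<in> B \<Longrightarrow> vderiv \<phi> t \<noteq> 0"
    by (intro that[of "ball 0 (min \<epsilon> \<delta>)"]) auto
  have \<phi>: "smooth_curve_on B \<phi>" using smooth_curve_on_subset[OF assms(3) B(3)] .
  note inj = inj_on_if_vderiv_nonzero[OF B(4) smooth_curve_on_differentiable[OF \<phi>] B(5)]
  have "continuous_on B \<phi>"
    using smooth_curve_on_differentiable[OF \<phi>]
    by (intro continuous_at_imp_continuous_on ballI differentiable_imp_continuous_within) auto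
  then have W: "open (\<phi> ` B)" by (rule invariance_of_domain[OF _ B(1) inj])
  define \<psi> where "\<psi> = the_inv_into B \<phi>"
  have \<psi>: "smooth_curve_on (\<phi> ` B) \<psi>" "\<psi> ` (\<phi> ` B) = B"
    "\<And>s. s \<in> \<phi> ` B \<Longrightarrow> \<phi> (\<psi> s) = s" "\<And>t. t \<in> B \<Longrightarrow> \<psi> (\<phi> t) = t"
    unfolding \<psi>_def
    using smooth_curve_on_the_inv_into[OF B(1) W \<phi> B(5) inj] the_inv_into_onto[OF inj]
      f_the_inv_into_f[OF inj] the_inv_into_f_f[OF inj] by auto
  have W0: "0 \<in> \<phi> ` B" using B(2) assms(4) by force
  have "diffeo_germ \<psi> 0 0"
    unfolding diffeo_germ_def
  proof (intro exI conjI)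
    show "0 \<in> \<phi> ` B" "\<psi> 0 = 0" using W0 \<psi>(4)[OF B(2)] assms(4) by auto
    show "smooth_on (\<phi> ` B) \<psi>" "smooth_on B \<phi>"
      using W B(1) \<psi>(1) \<phi> smooth_on_iff_smooth_curve_on by blast+
  qed (use \<psi> in auto)
  then show ?thesis using that[OF B(1-3) W W0 _ \<psi>(2,3)] by blast
qed

definition basis_coords :: "real \<times> real \<Rightarrow> real \<times> real \<Rightarrow> real \<times> real \<Rightarrow> real \<times> real" where
  "basis_coords A B x = (det2 x B / det2 A B, det2 A x / det2 A B)"

lemma bounded_linear_basis_coords: "bounded_linear (basis_coords A B)"
proof -
  have "linear (basis_coords A B)"
    by (rule linearI) (simp_all add: basis_coords_def det2_def add_divide_distrib diff_divide_distrib algebra_simps)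
  then show ?thesis by (simp add: linear_conv_bounded_linear)
qed

lemma basis_coords_combination:
  "det2 A B \<noteq> 0 \<Longrightarrow> basis_coords A B (a *\<^sub>R A + b *\<^sub>R B) = (a, b)"
  by (cases A; cases B) (simp add: basis_coords_def det2_def field_simps)

lemma basis_coords_inverse:
  assumes "det2 A B \<noteq> 0"
  shows "fst (basis_coords A B x) *\<^sub>R A + snd (basis_coords A B x) *\<^sub>R B = x"
proof -
  have "det2 A B *\<^sub>R x = det2 x B *\<^sub>R A + det2 A x *\<^sub>R B"
    by (cases x; cases A; cases B) (simp add: det2_def algebra_simps)
  then have "inverse (det2 A B) *\<^sub>R (det2 A B *\<^sub>R x) =
      inverse (det2 A B) *\<^sub>R (det2 x B *\<^sub>R A + det2 A x *\<^sub>R B)"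
    by simp
  then have "x = inverse (det2 A B) *\<^sub>R (det2 x B *\<^sub>R A + det2 A x *\<^sub>R B)"
    using assms by simp
  then show ?thesis
    by (simp add: basis_coords_def scaleR_add_right divide_inverse mult.commute)
qed

lemma dderivs_affine:
  fixes L :: "real \<times> real \<Rightarrow> real \<times> real"
  assumes "bounded_linear L"
  shows "dderivs (v # vs) (\<lambda>x. L x + c) = (\<lambda>_. if vs = [] then L v else 0)"
proof (induction vs arbitrary: v)
  case Nil
  have "((\<lambda>x. L x + c) has_derivative L) (at x)" for x
    using bounded_linear_imp_has_derivative[OF assms] by (auto intro: has_derivative_add_const)
  then show ?case using frechet_derivative_at by (metis dderivs.simps)
next
  case (Cons w vs)
  have "frechet_derivative (\<lambda>_. K) (at x) = (\<lambda>_. 0)" for x K :: "real \<times> real"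
    using frechet_derivative_at[OF has_derivative_const] by metis
  then show ?case using Cons by simp
qed

lemma smooth_on_affine:
  fixes L :: "real \<times> real \<Rightarrow> real \<times> real"
  assumes "bounded_linear L"
  shows "smooth_on UNIV (\<lambda>x. L x + c)"
  unfolding smooth_on_def
proof (intro conjI allI ballI open_UNIV)
  fix vs and x :: "real \<times> real"
  show "dderivs vs (\<lambda>x. L x + c) differentiable (at x)"
  proof (cases vs)
    case Nil
    then show ?thesis using bounded_linear_imp_has_derivative[OF assms]
      by (auto intro!: differentiableI has_derivative_add_const)
  next
    case (Cons v vs')
    then show ?thesis using dderivs_affine[OF assms] by simp
  qed
qed

lemma diffeo_germ_basis_coords:
  assumes "det2 A B \<noteq> 0"
  shows "diffeo_germ (\<lambda>x. basis_coords A B (x - p)) p 0"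
  unfolding diffeo_germ_def
proof (intro exI conjI)
  note L = bounded_linear_basis_coords[of A B]
  have M: "bounded_linear (\<lambda>y::real \<times> real. fst y *\<^sub>R A + snd y *\<^sub>R B)"
    by (intro bounded_linear_add bounded_linear_compose[OF bounded_linear_scaleR_left]
        bounded_linear_fst bounded_linear_snd)
  show "smooth_on UNIV (\<lambda>x. basis_coords A B (x - p))"
    using smooth_on_affine[OF L, of "- basis_coords A B p"] linear_diff[OF bounded_linear.linear[OF L]]
    by simp
  show "smooth_on UNIV (\<lambda>y. fst y *\<^sub>R A + snd y *\<^sub>R B + p)" by (rule smooth_on_affine[OF M])
  show "\<forall>x\<in>UNIV. fst (basis_coords A B (x - p)) *\<^sub>R A + snd (basis_coords A B (x - p)) *\<^sub>R B + p = x"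
    using basis_coords_inverse[OF assms] by simp
  show "\<forall>y\<in>UNIV. basis_coords A B (fst y *\<^sub>R A + snd y *\<^sub>R B + p - p) = y"
    using basis_coords_combination[OF assms] by simp
  then show "(\<lambda>x. basis_coords A B (x - p)) ` UNIV = UNIV" by (metis surj_def UNIV_I)
qed (simp_all add: linear_0[OF bounded_linear.linear[OF bounded_linear_basis_coords]])

section \<open>Sufficiency of the jet conditions\<close>

definition cubic_reparam :: "real \<Rightarrow> real \<Rightarrow> real \<Rightarrow> real" where
  "cubic_reparam d e t = t + d * t ^ 2 + e * t ^ 3"

definition cubic_power_coeff :: "real \<Rightarrow> real \<Rightarrow> nat \<Rightarrow> real" where
  "cubic_power_coeff d e m = real (m choose 2) * d ^ 2 + real m * e"

lemma smooth_curve_on_cubic_reparam: "smooth_curve_on U (cubic_reparam d e)"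
proof -
  have "cubic_reparam d e = (\<lambda>t. t ^ 1 *\<^sub>R 1 + t ^ 2 *\<^sub>R d + t ^ 3 *\<^sub>R e)"
    by (simp add: cubic_reparam_def fun_eq_iff algebra_simps)
  then have "smooth_curve_on UNIV (cubic_reparam d e)"
    by (simp only: smooth_curve_on_add[OF open_UNIV] smooth_curve_on_power_scaleR)
  then show ?thesis using smooth_curve_on_subset by blast
qed

lemma cubic_reparam_0 [simp]: "cubic_reparam d e 0 = 0"
  by (simp add: cubic_reparam_def)

lemma vderiv_cubic_reparam_0: "vderiv (cubic_reparam d e) 0 = 1"
proof -
  have "(cubic_reparam d e has_real_derivative 1 + d * (2 * 0) + e * (3 * 0 ^ 2)) (at 0)"
    unfolding cubic_reparam_def[abs_def] by (auto intro!: derivative_eq_intros)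
  then show ?thesis by (simp add: has_real_derivative_iff_has_vector_derivative vderiv_eqI)
qed

lemma cubic_reparam_power_expansion:
  "flat_at0 (m + 3) (\<lambda>t. cubic_reparam d e t ^ m -
     (t ^ m + real m * d * t ^ (m + 1) + cubic_power_coeff d e m * t ^ (m + 2)))"
proof (induction m)
  case 0
  then show ?case
    by (simp add: flat_at0_def cubic_power_coeff_def numeral_2_eq_2 smooth_curve_on_const vanishes_to_order_def
        nderiv_const)
next
  case (Suc m)
  let ?\<phi> = "cubic_reparam d e" and ?\<kappa> = "cubic_power_coeff d e"
  let ?E = "\<lambda>t. ?\<phi> t ^ m - (t ^ m + real m * d * t ^ (m + 1) + ?\<kappa> m * t ^ (m + 2))"
  have "vanishes_to_order 1 ?\<phi>" by (simp add: vanishes_to_order_Suc)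
  then have "flat_at0 (1 + (m + 3)) (\<lambda>t. ?\<phi> t *\<^sub>R ?E t)"
    using Suc smooth_curve_on_scaleR[OF open_UNIV smooth_curve_on_cubic_reparam]
      vanishes_to_order_scaleR(1)[OF open_UNIV UNIV_I smooth_curve_on_cubic_reparam]
    unfolding flat_at0_def by blast
  then have "flat_at0 (Suc m + 3) (\<lambda>t. t ^ (m + 4) *\<^sub>R (?\<kappa> m * d + real m * d * e) +
      t ^ (m + 5) *\<^sub>R (?\<kappa> m * e) + ?\<phi> t *\<^sub>R ?E t)"
    by (intro flat_at0_add flat_at0_power) simp_all
  moreover have "?\<kappa> (Suc m) = ?\<kappa> m + real m * d ^ 2 + e"
    by (simp add: cubic_power_coeff_def numeral_2_eq_2 algebra_simps)
  ultimately show ?case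
    by (simp add: cubic_reparam_def power_add power2_eq_square power3_eq_cube algebra_simps
        numeral_eq_Suc)
qed

lemma cubic_reparam_power_expansions:
  "flat_at0 (m + 2) (\<lambda>t. cubic_reparam d e t ^ m - (t ^ m + real m * d * t ^ (m + 1)))"
  "flat_at0 (m + 1) (\<lambda>t. cubic_reparam d e t ^ m - t ^ m)"
proof -
  note E = flat_at0_mono[OF cubic_reparam_power_expansion[of m d e]]
  have "flat_at0 (m + 2) (\<lambda>t. (cubic_reparam d e t ^ m -
      (t ^ m + real m * d * t ^ (m + 1) + cubic_power_coeff d e m * t ^ (m + 2))) +
      t ^ (m + 2) *\<^sub>R cubic_power_coeff d e m)"
    by (intro flat_at0_add E flat_at0_power) simp_all
  then show "flat_at0 (m + 2) (\<lambda>t. cubic_reparam d e t ^ m - (t ^ m + real m * d * t ^ (m + 1)))"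
    by (simp add: algebra_simps)
  have "flat_at0 (m + 1) (\<lambda>t. (cubic_reparam d e t ^ m -
      (t ^ m + real m * d * t ^ (m + 1) + cubic_power_coeff d e m * t ^ (m + 2))) +
      t ^ (m + 1) *\<^sub>R (real m * d) + t ^ (m + 2) *\<^sub>R cubic_power_coeff d e m)"
    by (intro flat_at0_add E flat_at0_power) simp_all
  then show "flat_at0 (m + 1) (\<lambda>t. cubic_reparam d e t ^ m - t ^ m)"
    by (simp add: algebra_simps)
qed

lemma taylor_sum_gap:
  fixes c :: "nat \<Rightarrow> 'a::real_vector"
  assumes "n \<ge> 1" "\<And>k. k \<in> {1..n-1} \<Longrightarrow> c k = 0"
  shows "(\<Sum>k\<le>n + 2. s ^ k *\<^sub>R c k) =
    c 0 + (s ^ n *\<^sub>R c n + s ^ (n + 1) *\<^sub>R c (n + 1) + s ^ (n + 2) *\<^sub>R c (n + 2))"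
proof -
  have "(\<Sum>k<n. s ^ k *\<^sub>R c k) = (\<Sum>k<n. if k = 0 then c 0 else 0)"
    using assms by (intro sum.cong) (auto simp: Suc_le_eq)
  also have "\<dots> = c 0" using assms(1) by simp
  finally show ?thesis by (simp add: numeral_2_eq_2 lessThan_Suc_atMost[symmetric] algebra_simps)
qed

lemma taylor_expansion_cusp:
  fixes \<gamma> :: "real \<Rightarrow> 'a::real_normed_vector"
  assumes "n \<ge> 1" "open I" "0 \<in> I" "smooth_curve_on I \<gamma>" "\<forall>k\<in>{1..n-1}. nderiv k \<gamma> 0 = 0"
  defines "R \<equiv> \<lambda>s. \<gamma> s - (\<gamma> 0 + (s ^ n *\<^sub>R (nderiv n \<gamma> 0 /\<^sub>R fact n) +
    s ^ (n + 1) *\<^sub>R (nderiv (n + 1) \<gamma> 0 /\<^sub>R fact (n + 1)) +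
    s ^ (n + 2) *\<^sub>R (nderiv (n + 2) \<gamma> 0 /\<^sub>R fact (n + 2))))"
  shows "smooth_curve_on I R" "vanishes_to_order (n + 3) R"
proof -
  define T where "T = (\<lambda>s. \<Sum>k\<le>n + 2. s ^ k *\<^sub>R (nderiv k \<gamma> 0 /\<^sub>R fact k))"
  have "T s = nderiv 0 \<gamma> 0 /\<^sub>R fact 0 + (s ^ n *\<^sub>R (nderiv n \<gamma> 0 /\<^sub>R fact n) +
      s ^ (n + 1) *\<^sub>R (nderiv (n + 1) \<gamma> 0 /\<^sub>R fact (n + 1)) +
      s ^ (n + 2) *\<^sub>R (nderiv (n + 2) \<gamma> 0 /\<^sub>R fact (n + 2)))" for s
    unfolding T_def by (rule taylor_sum_gap[OF assms(1)]) (use assms(5) in simp)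
  then have R: "R = (\<lambda>s. \<gamma> s - T s)" unfolding R_def by simp
  have "smooth_curve_on I T"
    unfolding T_def by (rule smooth_curve_on_sum[OF assms(2) finite_atMost smooth_curve_on_power_scaleR])
  then show "smooth_curve_on I R" unfolding R by (rule smooth_curve_on_diff[OF assms(2,4)])
  have "vanishes_to_order (Suc (n + 2)) (\<lambda>s. \<gamma> s - T s)"
    unfolding T_def by (rule taylor_remainder_vanishes_to_order[OF assms(2-4)])
  then show "vanishes_to_order (n + 3) R" unfolding R by (simp add: numeral_3_eq_3)
qed

lemma normal_form_remainder:
  fixes \<gamma> :: "real \<Rightarrow> real \<times> real"
  assumes "n \<ge> 1" "open I" "0 \<in> I" "smooth_curve_on I \<gamma>" "\<forall>k\<in>{1..n-1}. nderiv k \<gamma> 0 = 0"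
    and "open U" "0 \<in> U" "cubic_reparam d e ` U \<subseteq> I"
  defines "A \<equiv> nderiv n \<gamma> 0 /\<^sub>R fact n" and "B \<equiv> nderiv (n + 1) \<gamma> 0 /\<^sub>R fact (n + 1)"
    and "C \<equiv> nderiv (n + 2) \<gamma> 0 /\<^sub>R fact (n + 2)"
  assumes "cubic_power_coeff d e n *\<^sub>R A + (real (n + 1) * d) *\<^sub>R B + C = 0"
  defines "r \<equiv> \<lambda>t. \<gamma> (cubic_reparam d e t) - \<gamma> 0 - (t ^ n *\<^sub>R A + t ^ (n + 1) *\<^sub>R ((real n * d) *\<^sub>R A + B))"
  shows "smooth_curve_on U r" "vanishes_to_order (n + 3) r"
proof -
  let ?\<phi> = "cubic_reparam d e" and ?\<kappa> = "cubic_power_coeff d e"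
  define R where "R = (\<lambda>s. \<gamma> s - (\<gamma> 0 + (s ^ n *\<^sub>R A + s ^ (n + 1) *\<^sub>R B + s ^ (n + 2) *\<^sub>R C)))"
  note R = taylor_expansion_cusp[OF assms(1-5), folded A_def B_def C_def, folded R_def]
  define F where "F = (\<lambda>t. (?\<phi> t ^ n - (t ^ n + real n * d * t ^ (n + 1) + ?\<kappa> n * t ^ (n + 2))) *\<^sub>R A +
      (?\<phi> t ^ (n + 1) - (t ^ (n + 1) + real (n + 1) * d * t ^ (n + 1 + 1))) *\<^sub>R B +
      (?\<phi> t ^ (n + 2) - t ^ (n + 2)) *\<^sub>R C)"
  have "flat_at0 (n + 3) F"
    unfolding F_def using cubic_reparam_power_expansion[of n d e]
      cubic_reparam_power_expansions(1)[of "n + 1" d e] cubic_reparam_power_expansions(2)[of "n + 2" d e]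
    by (intro flat_at0_add flat_at0_scaleR) (simp_all add: numeral_3_eq_3)
  then have F: "smooth_curve_on U F" "vanishes_to_order (n + 3) F"
    unfolding flat_at0_def using smooth_curve_on_subset by auto
  have "r t = R (?\<phi> t) + F t" for t
  proof -
    have "?\<phi> t ^ n *\<^sub>R A + ?\<phi> t ^ (n + 1) *\<^sub>R B + ?\<phi> t ^ (n + 2) *\<^sub>R C =
        t ^ n *\<^sub>R A + t ^ (n + 1) *\<^sub>R ((real n * d) *\<^sub>R A + B) +
        t ^ (n + 2) *\<^sub>R (?\<kappa> n *\<^sub>R A + (real (n + 1) * d) *\<^sub>R B + C) + F t"
      unfolding F_def by (simp add: algebra_simps numeral_eq_Suc)
    moreover have "r t = R (?\<phi> t) + (?\<phi> t ^ n *\<^sub>R A + ?\<phi> t ^ (n + 1) *\<^sub>R B + ?\<phi> t ^ (n + 2) *\<^sub>R C) -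
        (t ^ n *\<^sub>R A + t ^ (n + 1) *\<^sub>R ((real n * d) *\<^sub>R A + B))"
      unfolding r_def R_def by (simp add: algebra_simps)
    ultimately show ?thesis using assms(12) by simp
  qed
  then have r: "r = (\<lambda>t. R (?\<phi> t) + F t)" by (simp add: fun_eq_iff)
  have R\<phi>: "smooth_curve_on U (\<lambda>t. R (?\<phi> t))" "vanishes_to_order (n + 3) (\<lambda>t. R (?\<phi> t))"
    using smooth_curve_on_compose[OF assms(6,2) R(1) smooth_curve_on_cubic_reparam assms(8)]
      vanishes_to_order_compose[OF assms(6,2,7) smooth_curve_on_cubic_reparam assms(8) cubic_reparam_0 R]
    by auto
  show "smooth_curve_on U r" unfolding r
    using smooth_curve_on_add[OF assms(6) R\<phi>(1) F(1)] by simp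
  show "vanishes_to_order (n + 3) r" unfolding r
    using vanishes_to_order_add[OF assms(6,7) R\<phi>(1) F(1) R\<phi>(2) F(2)] by simp
qed

lemma cubic_power_coeff_solvable:
  assumes "det2 A B \<noteq> 0" "n \<ge> 1"
  obtains d e where "cubic_power_coeff d e n *\<^sub>R A + (real (n + 1) * d) *\<^sub>R B + C = 0"
proof -
  define \<alpha> where "\<alpha> = fst (basis_coords A B C)"
  define \<beta> where "\<beta> = snd (basis_coords A B C)"
  define d where "d = - \<beta> / real (n + 1)"
  define e where "e = (- \<alpha> - real (n choose 2) * d ^ 2) / real n"
  have coeffs: "cubic_power_coeff d e n = - \<alpha>" "real (n + 1) * d = - \<beta>"
    using assms(2) by (simp_all add: cubic_power_coeff_def d_def e_def field_simps)
  have C: "C = \<alpha> *\<^sub>R A + \<beta> *\<^sub>R B"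
    using basis_coords_inverse[OF assms(1), of C] unfolding \<alpha>_def \<beta>_def by simp
  have "cubic_power_coeff d e n *\<^sub>R A + (real (n + 1) * d) *\<^sub>R B + C = 0"
    unfolding coeffs by (subst C) (simp add: algebra_simps)
  then show ?thesis by (rule that)
qed

lemma cusp_reparametrisation:
  fixes \<gamma> :: "real \<Rightarrow> real \<times> real"
  assumes "n \<ge> 1" "open I" "0 \<in> I" "smooth_curve_on I \<gamma>" "\<forall>k\<in>{1..n-1}. nderiv k \<gamma> 0 = 0"
    and "det2 (nderiv n \<gamma> 0) (nderiv (n + 1) \<gamma> 0) \<noteq> 0"
  obtains J W \<psi> \<phi> A B where "open J" "0 \<in> J" "open W" "0 \<in> W" "diffeo_germ \<psi> 0 0" "\<phi> 0 = 0"
    "\<And>s. s \<in> W \<Longrightarrow> \<phi> (\<psi> s) = s" "det2 A B \<noteq> 0"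
    "smooth_curve_on J (\<lambda>t. \<gamma> (\<phi> t) - \<gamma> 0 - (t ^ n *\<^sub>R A + t ^ (n + 1) *\<^sub>R B))"
    "vanishes_to_order (n + 3) (\<lambda>t. \<gamma> (\<phi> t) - \<gamma> 0 - (t ^ n *\<^sub>R A + t ^ (n + 1) *\<^sub>R B))"
proof -
  define A where "A = nderiv n \<gamma> 0 /\<^sub>R fact n"
  define B where "B = nderiv (n + 1) \<gamma> 0 /\<^sub>R fact (n + 1)"
  define C where "C = nderiv (n + 2) \<gamma> 0 /\<^sub>R fact (n + 2)"
  have "det2 A B = det2 (nderiv n \<gamma> 0) (nderiv (n + 1) \<gamma> 0) * (inverse (fact n) * inverse (fact (n + 1)))"
    by (simp add: A_def B_def det2_def algebra_simps)
  then have AB: "det2 A B \<noteq> 0" using assms(6) by simp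
  obtain d e where Z: "cubic_power_coeff d e n *\<^sub>R A + (real (n + 1) * d) *\<^sub>R B + C = 0"
    using cubic_power_coeff_solvable[OF AB assms(1)] by blast
  let ?\<phi> = "cubic_reparam d e"
  have "continuous_on UNIV ?\<phi>" unfolding cubic_reparam_def[abs_def] by (intro continuous_intros)
  then have U: "open (?\<phi> -` I)" "0 \<in> ?\<phi> -` I" using open_vimage[OF assms(2)] assms(3) by auto
  obtain J W \<psi> where J: "open J" "0 \<in> J" "J \<subseteq> ?\<phi> -` I" "open W" "0 \<in> W" "diffeo_germ \<psi> 0 0"
    "\<psi> ` W = J" "\<And>s. s \<in> W \<Longrightarrow> ?\<phi> (\<psi> s) = s"
    using real_local_inverse[OF U smooth_curve_on_cubic_reparam cubic_reparam_0] vderiv_cubic_reparam_0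
    by (metis zero_neq_one)
  have AB': "det2 A ((real n * d) *\<^sub>R A + B) \<noteq> 0" using AB by (simp add: det2_def algebra_simps)
  have "?\<phi> ` J \<subseteq> I" using J(3) by auto
  note remainder = normal_form_remainder[OF assms(1-5) J(1,2) this Z[unfolded A_def B_def C_def],
      folded A_def B_def]
  show ?thesis by (rule that[OF J(1,2,4-6) cubic_reparam_0 J(8) AB' remainder])
qed

lemma A_equiv_normal_form_if_cusp_jet:
  fixes \<gamma> :: "real \<Rightarrow> real \<times> real"
  assumes "n \<ge> 2" "smooth_on I \<gamma>" "0 \<in> I" "\<forall>k\<in>{1..n-1}. nderiv k \<gamma> 0 = 0"
    and "det2 (nderiv n \<gamma> 0) (nderiv (n + 1) \<gamma> 0) \<noteq> 0"
  shows "\<exists>J h. 0 \<in> J \<and> smooth_on J h \<and> (\<forall>k\<le>n + 2. nderiv k h 0 = 0) \<and>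
    A_equiv_at0 \<gamma> (\<lambda>t. (t ^ n, t ^ (n + 1)) + h t)"
proof -
  have "1 \<le> n" "open I" "smooth_curve_on I \<gamma>"
    using assms(1,2) smooth_on_iff_smooth_curve_on by auto
  then obtain J W \<psi> \<phi> A B where J: "open J" "0 \<in> J" "open W" "0 \<in> W" "diffeo_germ \<psi> 0 0" "\<phi> 0 = 0"
    "\<And>s. s \<in> W \<Longrightarrow> \<phi> (\<psi> s) = s" "det2 A B \<noteq> 0"
    and r: "smooth_curve_on J (\<lambda>t. \<gamma> (\<phi> t) - \<gamma> 0 - (t ^ n *\<^sub>R A + t ^ (n + 1) *\<^sub>R B))"
      "vanishes_to_order (n + 3) (\<lambda>t. \<gamma> (\<phi> t) - \<gamma> 0 - (t ^ n *\<^sub>R A + t ^ (n + 1) *\<^sub>R B))"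
    by (rule cusp_reparametrisation[OF _ _ assms(3) _ assms(4,5)]) blast
  define \<Psi> where "\<Psi> = (\<lambda>x. basis_coords A B (x - \<gamma> 0))"
  define h where "h = (\<lambda>t. basis_coords A B (\<gamma> (\<phi> t) - \<gamma> 0 - (t ^ n *\<^sub>R A + t ^ (n + 1) *\<^sub>R B)))"
  have "(t ^ n, t ^ (n + 1)) + h t = \<Psi> (\<gamma> (\<phi> t))" for t
    unfolding \<Psi>_def h_def using linear_diff[OF bounded_linear.linear[OF bounded_linear_basis_coords]]
      basis_coords_combination[OF J(8)] by simp
  then have normal_form: "(\<lambda>t. (t ^ n, t ^ (n + 1)) + h t) = (\<lambda>t. \<Psi> (\<gamma> (\<phi> t)))" by auto
  have "smooth_on J h"
    unfolding h_def smooth_on_iff_smooth_curve_on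
    using smooth_curve_on_bounded_linear[OF J(1) bounded_linear_basis_coords r(1)] J(1) by blast
  moreover have "\<forall>k\<le>n + 2. nderiv k h 0 = 0"
    using vanishes_to_order_bounded_linear[OF J(1,2) bounded_linear_basis_coords r]
    unfolding h_def vanishes_to_order_def by auto
  moreover have "A_equiv_at0 \<gamma> (\<lambda>t. (t ^ n, t ^ (n + 1)) + h t)"
  proof -
    have "\<Psi> (\<gamma> (\<phi> 0)) = 0"
      unfolding \<Psi>_def J(6)
      by (simp add: linear_0[OF bounded_linear.linear[OF bounded_linear_basis_coords]])
    then have "diffeo_germ \<Psi> (\<gamma> 0) (\<Psi> (\<gamma> (\<phi> 0)))"
      using diffeo_germ_basis_coords[OF J(8), of "\<gamma> 0", folded \<Psi>_def] by metis
    then show ?thesis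
      unfolding normal_form A_equiv_at0_def
      by (intro exI[of _ \<psi>] exI[of _ \<Psi>] exI[of _ W]) (use J in auto)
  qed
  ultimately show ?thesis using J(2) by blast
qed

theorem mainTheorem6:
  fixes n :: nat and I :: "real set" and \<gamma> :: "real \<Rightarrow> real \<times> real"
  assumes "n \<ge> 2" and "is_interval I" and "smooth_on I \<gamma>" and "0 \<in> I"
  shows "((\<forall>k\<in>{1..n-1}. nderiv k \<gamma> 0 = 0) \<and> det2 (nderiv n \<gamma> 0) (nderiv (n+1) \<gamma> 0) \<noteq> 0)
     \<longleftrightarrow> (\<exists>J h. 0 \<in> J \<and> smooth_on J h \<and> (\<forall>k\<le>n+2. nderiv k h 0 = 0) \<and>
            A_equiv_at0 \<gamma> (\<lambda>t. (t ^ n, t ^ (n+1)) + h t))"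
  using A_equiv_normal_form_if_cusp_jet[OF assms(1,3,4)]
    cusp_jet_if_A_equiv_normal_form[OF assms(1,3,4)] by blast

end
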